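(* Let $A$ be a self-adjoint operator on a separable Hilbert space $\mathfrak H$ with dense domain $D(A)$, and let $\lambda\in\mathrm{Spu}(A)$. Then $\mathrm{tr}\,\chi_{(-\infty,\lambda]}(A)=\mathrm{tr}\,\chi_{[\lambda,\infty)}(A)=+\infty$; equivalently, $\lambda\in\mathrm{Conv}(\hat\sigma_{\rm ess}(A))$.
   Context: $D(A)$ carries the graph norm. For a finite-dimensional subspace $V\subset D(A)$, $A_{|V}$ denotes the restriction of $P_VAP_V$ to $V$ ($P_V$ the orthogonal projector onto $V$). $\lambda\in\mathbb R$ is a spurious eigenvalue of $A$ ($\lambda\in\mathrm{Spu}(A)$) if there are finite-dimensional subspaces $V_n\subset D(A)$, $V_n\subset V_{n+1}$, with $\bigcup_nV_n$ dense in $D(A)$ for the graph norm, $\mathrm{dist}(\lambda,\sigma(A_{|V_n}))\to0$, and $\lambda\notin\sigma(A)$. $\hat\sigma_{\rm ess}(A)$ denotes $\sigma_{\rm ess}(A)$ together with $-\infty$ (resp. $+\infty$) if $\sigma(A)$ is unbounded from below (resp. above); $\mathrm{Conv}$ denotes the convex hull in $[-\infty,+\infty]$. $\chi_I$ denotes the characteristic function of $I$ and $\chi_I(A)$ the spectral projector. *)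

theory Defs
  imports "HOL-Analysis.Analysis"
begin

text \<open>A complex Hilbert space is modelled as a real Banach space 'a (type class banach)
  together with a complex scalar multiplication sm extending the real one and a complex
  inner product ip (linear in the first, conjugate linear in the second argument)
  that induces the norm of 'a.\<close>

definition complex_hilbert :: "(complex \<Rightarrow> 'a::banach \<Rightarrow> 'a) \<Rightarrow> ('a \<Rightarrow> 'a \<Rightarrow> complex) \<Rightarrow> bool" where
  "complex_hilbert sm ip \<longleftrightarrow>
     (\<forall>x. sm 1 x = x) \<and>
     (\<forall>a b x. sm (a * b) x = sm a (sm b x)) \<and>
     (\<forall>a x y. sm a (x + y) = sm a x + sm a y) \<and>
     (\<forall>a b x. sm (a + b) x = sm a x + sm b x) \<and>
     (\<forall>r x. sm (complex_of_real r) x = r *\<^sub>R x) \<and>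
     (\<forall>x y z. ip (x + y) z = ip x z + ip y z) \<and>
     (\<forall>a x y. ip (sm a x) y = a * ip x y) \<and>
     (\<forall>x y. ip y x = cnj (ip x y)) \<and>
     (\<forall>x. norm x = sqrt (Re (ip x x)))"

definition hseparable :: "'a::topological_space itself \<Rightarrow> bool" where
  "hseparable _ \<longleftrightarrow> (\<exists>S::'a set. countable S \<and> closure S = UNIV)"

definition csubspace :: "(complex \<Rightarrow> 'a::real_vector \<Rightarrow> 'a) \<Rightarrow> 'a set \<Rightarrow> bool" where
  "csubspace sm V \<longleftrightarrow> 0 \<in> V \<and> (\<forall>x\<in>V. \<forall>y\<in>V. x + y \<in> V) \<and> (\<forall>a. \<forall>x\<in>V. sm a x \<in> V)"

definition cfin_dim :: "(complex \<Rightarrow> 'a::real_vector \<Rightarrow> 'a) \<Rightarrow> 'a set \<Rightarrow> bool" where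
  "cfin_dim sm V \<longleftrightarrow> (\<exists>S. finite S \<and> (\<forall>v\<in>V. \<exists>c. v = (\<Sum>s\<in>S. sm (c s) s)))"

definition clinear_on :: "(complex \<Rightarrow> 'a::real_vector \<Rightarrow> 'a) \<Rightarrow> 'a set \<Rightarrow> ('a \<Rightarrow> 'a) \<Rightarrow> bool" where
  "clinear_on sm D A \<longleftrightarrow> (\<forall>x\<in>D. \<forall>y\<in>D. A (x + y) = A x + A y) \<and> (\<forall>a. \<forall>x\<in>D. A (sm a x) = sm a (A x))"

text \<open>Densely defined self-adjoint operator with domain D: symmetric, and D(A^*) contained in D.\<close>
definition selfadjoint :: "(complex \<Rightarrow> 'a::banach \<Rightarrow> 'a) \<Rightarrow> ('a \<Rightarrow> 'a \<Rightarrow> complex) \<Rightarrow> 'a set \<Rightarrow> ('a \<Rightarrow> 'a) \<Rightarrow> bool" where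
  "selfadjoint sm ip D A \<longleftrightarrow>
     csubspace sm D \<and> clinear_on sm D A \<and> closure D = UNIV \<and>
     (\<forall>x\<in>D. \<forall>y\<in>D. ip (A x) y = ip x (A y)) \<and>
     (\<forall>y z. (\<forall>x\<in>D. ip (A x) y = ip x z) \<longrightarrow> y \<in> D)"

definition op_spectrum :: "(complex \<Rightarrow> 'a::banach \<Rightarrow> 'a) \<Rightarrow> 'a set \<Rightarrow> ('a \<Rightarrow> 'a) \<Rightarrow> complex set" where
  "op_spectrum sm D A = {z. \<not> (bij_betw (\<lambda>x. A x - sm z x) D UNIV \<and>
        (\<exists>C. \<forall>x\<in>D. norm x \<le> C * norm (A x - sm z x)))}"

definition real_spectrum :: "(complex \<Rightarrow> 'a::banach \<Rightarrow> 'a) \<Rightarrow> 'a set \<Rightarrow> ('a \<Rightarrow> 'a) \<Rightarrow> real set" where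
  "real_spectrum sm D A = {r. complex_of_real r \<in> op_spectrum sm D A}"

text \<open>Essential spectrum: spectrum minus the discrete spectrum (isolated eigenvalues of
  finite multiplicity).\<close>
definition ess_spectrum :: "(complex \<Rightarrow> 'a::banach \<Rightarrow> 'a) \<Rightarrow> 'a set \<Rightarrow> ('a \<Rightarrow> 'a) \<Rightarrow> complex set" where
  "ess_spectrum sm D A = {z \<in> op_spectrum sm D A.
     \<not> ((\<exists>e>0. \<forall>w\<in>op_spectrum sm D A. w \<noteq> z \<longrightarrow> e \<le> cmod (w - z)) \<and>
        (\<exists>x\<in>D. x \<noteq> 0 \<and> A x = sm z x) \<and>
        cfin_dim sm {x\<in>D. A x = sm z x})}"

definition ess_hat :: "(complex \<Rightarrow> 'a::banach \<Rightarrow> 'a) \<Rightarrow> 'a set \<Rightarrow> ('a \<Rightarrow> 'a) \<Rightarrow> ereal set" where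
  "ess_hat sm D A =
     ereal ` {r. complex_of_real r \<in> ess_spectrum sm D A}
     \<union> (if bdd_below (real_spectrum sm D A) then {} else {-\<infinity>})
     \<union> (if bdd_above (real_spectrum sm D A) then {} else {\<infinity>})"

definition ConvE :: "ereal set \<Rightarrow> ereal set" where
  "ConvE S = {x. \<exists>a\<in>S. \<exists>b\<in>S. a \<le> x \<and> x \<le> b}"

definition orthproj :: "('a::real_vector \<Rightarrow> 'a \<Rightarrow> complex) \<Rightarrow> 'a set \<Rightarrow> 'a \<Rightarrow> 'a" where
  "orthproj ip V y = (THE p. p \<in> V \<and> (\<forall>w\<in>V. ip (y - p) w = 0))"

text \<open>Spectrum of the compression A_{|V} = P_V A P_V restricted to V.\<close>
definition compr_spectrum :: "(complex \<Rightarrow> 'a::real_vector \<Rightarrow> 'a) \<Rightarrow> ('a \<Rightarrow> 'a \<Rightarrow> complex) \<Rightarrow> 'a set \<Rightarrow> ('a \<Rightarrow> 'a) \<Rightarrow> complex set" where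
  "compr_spectrum sm ip V A = {z. \<exists>v\<in>V. v \<noteq> 0 \<and> orthproj ip V (A (orthproj ip V v)) = sm z v}"

definition spurious :: "(complex \<Rightarrow> 'a::banach \<Rightarrow> 'a) \<Rightarrow> ('a \<Rightarrow> 'a \<Rightarrow> complex) \<Rightarrow> 'a set \<Rightarrow> ('a \<Rightarrow> 'a) \<Rightarrow> real set" where
  "spurious sm ip D A = {lam.
     (\<exists>V :: nat \<Rightarrow> 'a set.
        (\<forall>n. csubspace sm (V n) \<and> cfin_dim sm (V n) \<and> V n \<subseteq> D \<and> V n \<subseteq> V (Suc n)) \<and>
        (\<forall>x\<in>D. \<forall>e>0. \<exists>n. \<exists>v\<in>V n. norm (x - v) + norm (A x - A v) < e) \<and>
        (\<forall>e>0. \<forall>\<^sub>F n in sequentially. \<exists>z\<in>compr_spectrum sm ip (V n) A. cmod (z - complex_of_real lam) < e)) \<and>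
     complex_of_real lam \<notin> op_spectrum sm D A}"

end

theory Submission
  imports Defs
begin

(* Let lam be a spurious eigenvalue.  Since lam lies outside the spectrum,
   T = (A - lam)^-1 is a bounded self-adjoint operator.  Suppose lam is not in the
   convex hull of the extended essential spectrum; then on one side of lam (say below,
   the other side is symmetric with a sign s = +-1) the spectrum of A is bounded and
   consists of finitely many isolated eigenvalues r_1..r_k of finite multiplicity.
   Translated to T, the only negative spectrum of s*T consists of the finitely many
   eigenvalues s/(r_i - lam), so s*T is nonnegative on the orthogonal complement of the
   span of an orthonormal eigenbasis Bs of those eigenspaces.  This gives a splitting
   v = e + f (e in span Bs, f orthogonal to Bs) on which s*<(A - lam) v, v - 2e> is
   coercive.  On the other hand, an eigenvector v of the Galerkin compression on V_n
   with eigenvalue z close to lam, tested against v - 2 e' with e' in V_n close to e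
   in the graph norm, makes this same quantity small: contradiction. *)

section \<open>Complex Hilbert space algebra\<close>

locale chilbert =
  fixes sm :: "complex \<Rightarrow> 'a::banach \<Rightarrow> 'a" and ip :: "'a \<Rightarrow> 'a \<Rightarrow> complex"
  assumes hilbert: "complex_hilbert sm ip"
begin

lemma sm_one[simp]: "sm 1 x = x" using hilbert unfolding complex_hilbert_def by metis
lemma sm_mult: "sm (a * b) x = sm a (sm b x)" using hilbert unfolding complex_hilbert_def by blast
lemma sm_add_right: "sm a (x + y) = sm a x + sm a y" using hilbert unfolding complex_hilbert_def by blast
lemma sm_add_left: "sm (a + b) x = sm a x + sm b x" using hilbert unfolding complex_hilbert_def by blast
lemma sm_real: "sm (complex_of_real r) x = r *\<^sub>R x" using hilbert unfolding complex_hilbert_def by blast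
lemma ip_add_left: "ip (x + y) z = ip x z + ip y z" using hilbert unfolding complex_hilbert_def by blast
lemma ip_sm_left: "ip (sm a x) y = a * ip x y" using hilbert unfolding complex_hilbert_def by blast
lemma ip_conj: "ip y x = cnj (ip x y)" using hilbert unfolding complex_hilbert_def by blast
lemma norm_ip: "norm x = sqrt (Re (ip x x))" using hilbert unfolding complex_hilbert_def by blast

lemma ip_add_right: "ip z (x + y) = ip z x + ip z y"
  by (metis complex_cnj_add ip_add_left ip_conj)
lemma ip_sm_right: "ip x (sm a y) = cnj a * ip x y"
  by (metis complex_cnj_mult ip_conj ip_sm_left)
lemma ip_zero_left[simp]: "ip 0 y = 0"
  using ip_add_left[of 0 0 y] by simp
lemma ip_zero_right[simp]: "ip y 0 = 0"
  using ip_add_right[of y 0 0] by simp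
lemma ip_minus_left: "ip (- x) y = - ip x y"
  using ip_add_left[of x "-x" y] by (simp add: add_eq_0_iff)
lemma ip_minus_right: "ip y (- x) = - ip y x"
  using ip_add_right[of y x "-x"] by (simp add: add_eq_0_iff)
lemma ip_diff_left: "ip (x - z) y = ip x y - ip z y"
  using ip_add_left[of x "-z" y] ip_minus_left by simp
lemma ip_diff_right: "ip y (x - z) = ip y x - ip y z"
  using ip_add_right[of y x "-z"] ip_minus_right by simp
lemma ip_scaleR_left: "ip (r *\<^sub>R x) y = complex_of_real r * ip x y"
  by (metis ip_sm_left sm_real)
lemma ip_scaleR_right: "ip y (r *\<^sub>R x) = complex_of_real r * ip y x"
  by (metis complex_cnj_complex_of_real ip_sm_right sm_real)

lemma sm_zero[simp]: "sm 0 x = 0"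
  using sm_real[of 0 x] by simp
lemma sm_zero_right[simp]: "sm a 0 = 0"
  using sm_add_right[of a 0 0] by simp
lemma sm_minus_right: "sm a (- x) = - sm a x"
  using sm_add_right[of a x "-x"] by (simp add: add_eq_0_iff)
lemma sm_diff_right: "sm a (x - y) = sm a x - sm a y"
  using sm_add_right[of a x "-y"] sm_minus_right by simp
lemma sm_minus_left: "sm (- a) x = - sm a x"
  using sm_add_left[of a "-a" x] by (simp add: add_eq_0_iff)
lemma sm_diff_left: "sm (a - b) x = sm a x - sm b x"
  using sm_add_left[of a "-b" x] sm_minus_left by simp
lemma sm_scaleR_comm: "sm a (r *\<^sub>R x) = r *\<^sub>R sm a x"
  by (metis mult.commute sm_mult sm_real)

lemma ip_self: "ip x x = complex_of_real ((norm x)\<^sup>2)"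
proof -
  have "sqrt (Re (ip x x)) \<ge> 0" using norm_ip[of x] by (metis norm_ge_zero)
  hence "Re (ip x x) \<ge> 0" by (metis real_sqrt_lt_0_iff not_le)
  hence "Re (ip x x) = (norm x)\<^sup>2" using norm_ip[of x] by simp
  moreover have "Im (ip x x) = 0" using ip_conj[of x x] by (metis cnj.sel(2) equal_neg_zero)
  ultimately show ?thesis by (simp add: complex_eq_iff)
qed

lemma ip_self_zero_iff: "ip x x = 0 \<longleftrightarrow> x = 0"
  using ip_self by simp

lemma norm_sm: "norm (sm a x) = cmod a * norm x"
proof -
  have "complex_of_real ((norm (sm a x))\<^sup>2) = a * cnj a * complex_of_real ((norm x)\<^sup>2)"
    using ip_self ip_sm_left ip_sm_right by (metis mult.assoc)
  also have "\<dots> = complex_of_real ((cmod a * norm x)\<^sup>2)"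
    by (simp add: complex_norm_square[symmetric] power_mult_distrib)
  finally have "(norm (sm a x))\<^sup>2 = (cmod a * norm x)\<^sup>2" using of_real_eq_iff by blast
  thus ?thesis by (simp add: power2_eq_iff_nonneg)
qed

lemma norm_add_sq: "(norm (x + y))\<^sup>2 = (norm x)\<^sup>2 + 2 * Re (ip x y) + (norm y)\<^sup>2"
proof -
  have "ip (x+y) (x+y) = ip x x + ip x y + ip y x + ip y y"
    by (simp add: ip_add_left ip_add_right)
  hence "complex_of_real ((norm (x + y))\<^sup>2) = ip x x + ip x y + ip y x + ip y y"
    by (simp only: ip_self)
  hence "(norm (x + y))\<^sup>2 = Re (ip x x + ip x y + ip y x + ip y y)"
    by (metis Re_complex_of_real)
  thus ?thesis using ip_conj[of x y] by (simp add: ip_self)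
qed

lemma norm_diff_sq: "(norm (x - y))\<^sup>2 = (norm x)\<^sup>2 - 2 * Re (ip x y) + (norm y)\<^sup>2"
  using norm_add_sq[of x "-y"] by (simp add: ip_minus_right)

lemma parallelogram: fixes x y :: 'a
  shows "(norm (x + y))\<^sup>2 + (norm (x - y))\<^sup>2 = 2 * (norm x)\<^sup>2 + 2 * (norm y)\<^sup>2"
  using norm_add_sq[of x y] norm_diff_sq[of x y] by simp

lemma cauchy_schwarz: "cmod (ip x y) \<le> norm x * norm y"
proof (cases "y = 0")
  case True thus ?thesis by simp
next
  case False
  have sq: "complex_of_real (cmod z) * complex_of_real (cmod z) = z * cnj z" for z
    by (metis complex_norm_square of_real_mult power2_eq_square)
  define n where "n = (norm y)\<^sup>2"
  have n: "n > 0" using False n_def by simp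
  define p where "p = ip x y"
  \<comment> \<open>Expand the norm of the residual of x after subtracting its component along y.\<close>
  define c where "c = p / complex_of_real n"
  have "ip (x - sm c y) (x - sm c y) = ip x x - cnj c * p - c * ip y x + c * cnj c * ip y y"
    by (simp add: ip_diff_left ip_diff_right ip_sm_left ip_sm_right p_def algebra_simps)
  also have "\<dots> = complex_of_real ((norm x)\<^sup>2 - (cmod p)\<^sup>2 / n)"
    using n ip_conj[of x y] unfolding c_def ip_self n_def[symmetric] p_def[symmetric]
    by (simp add: field_simps power2_eq_square sq)
  finally have "(norm (x - sm c y))\<^sup>2 = (norm x)\<^sup>2 - (cmod p)\<^sup>2 / n"
    using ip_self by (metis of_real_eq_iff)
  hence "(cmod p)\<^sup>2 / n \<le> (norm x)\<^sup>2" by (metis diff_ge_0_iff_ge zero_le_power2)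
  hence "(cmod p)\<^sup>2 \<le> (norm x * norm y)\<^sup>2" using n unfolding n_def
    by (simp add: pos_divide_le_eq power_mult_distrib)
  thus ?thesis unfolding p_def by (meson norm_ge_zero power2_le_imp_le mult_nonneg_nonneg)
qed

lemma bounded_linear_ip_left: "bounded_linear (\<lambda>x. ip x y)"
proof (rule bounded_linear_intro[where K="norm y"])
  show "\<And>x1 x2. ip (x1 + x2) y = ip x1 y + ip x2 y" by (rule ip_add_left)
  show "\<And>r x. ip (r *\<^sub>R x) y = r *\<^sub>R ip x y" by (simp add: ip_scaleR_left scaleR_conv_of_real)
  show "\<And>x. norm (ip x y) \<le> norm x * norm y" by (rule cauchy_schwarz)
qed

lemma bounded_linear_ip_right: "bounded_linear (\<lambda>y. ip x y)"
proof (rule bounded_linear_intro[where K="norm x"])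
  show "\<And>x1 x2. ip x (x1 + x2) = ip x x1 + ip x x2" by (rule ip_add_right)
  show "\<And>r y. ip x (r *\<^sub>R y) = r *\<^sub>R ip x y" by (simp add: ip_scaleR_right scaleR_conv_of_real)
  show "\<And>y. norm (ip x y) \<le> norm y * norm x" using cauchy_schwarz by (metis mult.commute)
qed

lemma bounded_linear_sm: "bounded_linear (sm a)"
proof (rule bounded_linear_intro[where K="cmod a"])
  show "\<And>x1 x2. sm a (x1 + x2) = sm a x1 + sm a x2" by (rule sm_add_right)
  show "\<And>r x. sm a (r *\<^sub>R x) = r *\<^sub>R sm a x" by (rule sm_scaleR_comm)
  show "\<And>x. norm (sm a x) \<le> norm x * cmod a" by (simp add: norm_sm mult.commute)
qed

lemma ip_sum_left: "ip (\<Sum>s\<in>S. f s) y = (\<Sum>s\<in>S. ip (f s) y)"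
  using linear_sum[OF bounded_linear.linear[OF bounded_linear_ip_left]] by blast
lemma ip_sum_right: "ip y (\<Sum>s\<in>S. f s) = (\<Sum>s\<in>S. ip y (f s))"
  using linear_sum[OF bounded_linear.linear[OF bounded_linear_ip_right]] by blast
lemma sm_sum: "sm a (\<Sum>s\<in>S. f s) = (\<Sum>s\<in>S. sm a (f s))"
  using linear_sum[OF bounded_linear.linear[OF bounded_linear_sm]] by blast

lemma ip_zero_all: "(\<And>y. ip x y = 0) \<Longrightarrow> x = 0"
  using ip_self_zero_iff by blast

section \<open>Subspaces, orthonormal sets and orthogonal projections\<close>

lemma csub_zero: "csubspace sm V \<Longrightarrow> 0 \<in> V" unfolding csubspace_def by blast
lemma csub_add: "csubspace sm V \<Longrightarrow> x \<in> V \<Longrightarrow> y \<in> V \<Longrightarrow> x + y \<in> V" unfolding csubspace_def by blast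
lemma csub_sm: "csubspace sm V \<Longrightarrow> x \<in> V \<Longrightarrow> sm a x \<in> V" unfolding csubspace_def by blast
lemma csub_minus: "csubspace sm V \<Longrightarrow> x \<in> V \<Longrightarrow> - x \<in> V"
  using csub_sm[of V x "-1"] by (simp add: sm_minus_left)
lemma csub_diff: "csubspace sm V \<Longrightarrow> x \<in> V \<Longrightarrow> y \<in> V \<Longrightarrow> x - y \<in> V"
  using csub_add[of V x "-y"] csub_minus by simp
lemma csub_scaleR: "csubspace sm V \<Longrightarrow> x \<in> V \<Longrightarrow> r *\<^sub>R x \<in> V"
  using csub_sm[of V x "complex_of_real r"] by (simp add: sm_real)
lemma csub_sum: "csubspace sm V \<Longrightarrow> (\<And>s. s \<in> S \<Longrightarrow> f s \<in> V) \<Longrightarrow> (\<Sum>s\<in>S. f s) \<in> V"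
  by (induction S rule: infinite_finite_induct) (simp_all add: csub_zero csub_add)
lemma csub_inter: "csubspace sm V \<Longrightarrow> csubspace sm W \<Longrightarrow> csubspace sm (V \<inter> W)"
  unfolding csubspace_def by blast

lemma csub_orth: "csubspace sm {y. \<forall>b\<in>Bs. ip y b = 0}"
  unfolding csubspace_def by (auto simp: ip_add_left ip_sm_left)

lemma csub_closure: assumes "csubspace sm V" shows "csubspace sm (closure V)"
  unfolding csubspace_def
proof (intro conjI ballI allI)
  show "0 \<in> closure V" using csub_zero[OF assms] closure_subset by blast
next
  fix x y assume "x \<in> closure V" "y \<in> closure V"
  then obtain a b where a: "\<forall>n. a n \<in> V" "a \<longlonglongrightarrow> x" and b: "\<forall>n. b n \<in> V" "b \<longlonglongrightarrow> y"
    unfolding closure_sequential by blast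
  have "(\<lambda>n. a n + b n) \<longlonglongrightarrow> x + y" by (intro tendsto_intros a b)
  moreover have "\<forall>n. a n + b n \<in> V" using a b csub_add[OF assms] by blast
  ultimately show "x + y \<in> closure V"
    unfolding closure_sequential by (intro exI[of _ "\<lambda>n. a n + b n"] conjI)
next
  fix c x assume "x \<in> closure V"
  then obtain a where a: "\<forall>n. a n \<in> V" "a \<longlonglongrightarrow> x" unfolding closure_sequential by blast
  have "(\<lambda>n. sm c (a n)) \<longlonglongrightarrow> sm c x" by (rule bounded_linear.tendsto[OF bounded_linear_sm a(2)])
  moreover have "\<forall>n. sm c (a n) \<in> V" using a csub_sm[OF assms] by blast
  ultimately show "sm c x \<in> closure V"
    unfolding closure_sequential by (intro exI[of _ "\<lambda>n. sm c (a n)"] conjI)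
qed

definition cspan :: "'a set \<Rightarrow> 'a set" where
  "cspan S = {v. \<exists>c. v = (\<Sum>s\<in>S. sm (c s) s)}"

definition orthonormal :: "'a set \<Rightarrow> bool" where
  "orthonormal Bs \<longleftrightarrow> (\<forall>b\<in>Bs. ip b b = 1) \<and> (\<forall>b\<in>Bs. \<forall>b'\<in>Bs. b \<noteq> b' \<longrightarrow> ip b b' = 0)"

lemma lin_comb_in_cspan: "(\<Sum>s\<in>S. sm (c s) s) \<in> cspan S"
  unfolding cspan_def by blast

lemma cfin_dim_iff: "cfin_dim sm V \<longleftrightarrow> (\<exists>S. finite S \<and> V \<subseteq> cspan S)"
  unfolding cfin_dim_def cspan_def by (simp only: subset_eq mem_Collect_eq)

lemma cspan_csub: "csubspace sm (cspan S)"
  unfolding csubspace_def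
proof (intro conjI ballI allI)
  show "0 \<in> cspan S" unfolding cspan_def by (auto intro!: exI[of _ "\<lambda>_. 0"])
next
  fix x y assume "x \<in> cspan S" "y \<in> cspan S"
  then obtain c d where "x = (\<Sum>s\<in>S. sm (c s) s)" "y = (\<Sum>s\<in>S. sm (d s) s)"
    unfolding cspan_def by blast
  hence "x + y = (\<Sum>s\<in>S. sm (c s + d s) s)" by (simp add: sm_add_left sum.distrib)
  thus "x + y \<in> cspan S" unfolding cspan_def by (auto intro!: exI[of _ "\<lambda>s. c s + d s"])
next
  fix a x assume "x \<in> cspan S"
  then obtain c where "x = (\<Sum>s\<in>S. sm (c s) s)" unfolding cspan_def by blast
  hence "sm a x = (\<Sum>s\<in>S. sm (a * c s) s)" by (simp add: sm_sum sm_mult)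
  thus "sm a x \<in> cspan S" unfolding cspan_def by (auto intro!: exI[of _ "\<lambda>s. a * c s"])
qed

lemma in_cspan: assumes "finite S" "s \<in> S" shows "s \<in> cspan S"
proof -
  have "(\<Sum>t\<in>S. sm (if t = s then 1 else 0) t) = (\<Sum>t\<in>S. if t = s then t else 0)"
    by (rule sum.cong) auto
  also have "\<dots> = s" using assms by (simp add: sum.delta')
  finally show ?thesis unfolding cspan_def by (auto intro!: exI[of _ "\<lambda>t. if t = s then 1 else 0"])
qed

lemma cspan_sub: assumes "csubspace sm V" "S \<subseteq> V" shows "cspan S \<subseteq> V"
proof
  fix v assume "v \<in> cspan S"
  then obtain c where "v = (\<Sum>s\<in>S. sm (c s) s)" unfolding cspan_def by blast
  thus "v \<in> V" using assms csub_sm by (auto intro!: csub_sum[OF assms(1)])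
qed

lemma cspan_mono: assumes "finite T" "S \<subseteq> T" shows "cspan S \<subseteq> cspan T"
  using cspan_sub[OF cspan_csub] in_cspan[OF assms(1)] assms(2) by blast

lemma orth_cspan: assumes "\<forall>b\<in>B. ip y b = 0" "k \<in> cspan B" shows "ip y k = 0"
proof -
  from assms(2) obtain c where "k = (\<Sum>b\<in>B. sm (c b) b)" unfolding cspan_def by blast
  thus ?thesis using assms(1) by (simp add: ip_sum_right ip_sm_right)
qed

lemma ip_orthonormal_left: assumes "orthonormal Bs" "finite Bs" "b' \<in> Bs"
  shows "ip (\<Sum>b\<in>Bs. sm (c b) b) b' = c b'"
proof -
  have "ip (\<Sum>b\<in>Bs. sm (c b) b) b' = (\<Sum>b\<in>Bs. c b * ip b b')" by (simp add: ip_sum_left ip_sm_left)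
  also have "\<dots> = (\<Sum>b\<in>Bs. if b = b' then c b' else 0)"
    using assms unfolding orthonormal_def by (intro sum.cong) auto
  also have "\<dots> = c b'" using assms by (simp add: sum.delta')
  finally show ?thesis .
qed

lemma ip_orthonormal_sums: assumes "orthonormal Bs" "finite Bs"
  shows "ip (\<Sum>b\<in>Bs. sm (c b) b) (\<Sum>b\<in>Bs. sm (d b) b) = (\<Sum>b\<in>Bs. c b * cnj (d b))"
proof -
  have "ip b (\<Sum>b\<in>Bs. sm (d b) b) = cnj (d b)" if "b \<in> Bs" for b
    using ip_orthonormal_left[OF assms that, of d] ip_conj by metis
  thus ?thesis by (simp add: ip_sum_left ip_sm_left)
qed

lemma norm_orthonormal_sum: assumes "orthonormal Bs" "finite Bs"
  shows "(norm (\<Sum>b\<in>Bs. sm (c b) b))\<^sup>2 = (\<Sum>b\<in>Bs. (cmod (c b))\<^sup>2)"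
proof -
  have "complex_of_real ((norm (\<Sum>b\<in>Bs. sm (c b) b))\<^sup>2) = (\<Sum>b\<in>Bs. c b * cnj (c b))"
    using ip_orthonormal_sums[OF assms, of c c] ip_self by metis
  also have "\<dots> = complex_of_real (\<Sum>b\<in>Bs. (cmod (c b))\<^sup>2)"
    unfolding of_real_sum by (rule sum.cong) (simp_all only: complex_norm_square)
  finally show ?thesis using of_real_eq_iff by blast
qed

lemma norm_orthonormal: assumes "orthonormal Bs" "b \<in> Bs" shows "norm b = 1"
proof -
  have "complex_of_real ((norm b)\<^sup>2) = 1" using assms ip_self[of b] unfolding orthonormal_def by simp
  hence "(norm b)\<^sup>2 = 1" by (metis of_real_eq_1_iff)
  hence "norm b = 1 \<or> norm b = -1" by (simp add: power2_eq_1_iff)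
  thus ?thesis using norm_ge_zero[of b] by linarith
qed

definition onb_proj :: "'a set \<Rightarrow> 'a \<Rightarrow> 'a" where
  "onb_proj Bs y = (\<Sum>b\<in>Bs. sm (ip y b) b)"

lemma onb_proj_in: "onb_proj Bs y \<in> cspan Bs" unfolding onb_proj_def by (rule lin_comb_in_cspan)

lemma onb_proj_orth: assumes "orthonormal Bs" "finite Bs" "b' \<in> Bs"
  shows "ip (y - onb_proj Bs y) b' = 0"
  using ip_orthonormal_left[OF assms, of "\<lambda>b. ip y b"] unfolding onb_proj_def by (simp add: ip_diff_left)

lemma onb_proj_orth_span: assumes "orthonormal Bs" "finite Bs" "w \<in> cspan Bs"
  shows "ip (y - onb_proj Bs y) w = 0"
  using orth_cspan[OF _ assms(3)] onb_proj_orth[OF assms(1,2)] by blast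

lemma gram_schmidt_step:
  assumes Bs: "orthonormal Bs" "finite Bs" and u: "u \<notin> cspan Bs"
  obtains e where "orthonormal (insert e Bs)" "e \<in> cspan (insert u Bs)" "u \<in> cspan (insert e Bs)"
proof -
  define u' where "u' = u - onb_proj Bs u"
  have u'nz: "u' \<noteq> 0" using u onb_proj_in[of Bs u] unfolding u'_def by auto
  define e where "e = sm (complex_of_real (1 / norm u')) u'"
  have "norm e = 1" unfolding e_def using u'nz by (simp add: norm_sm norm_divide)
  hence e_self: "ip e e = 1" using ip_self by simp
  have e_orth: "ip e b = 0" if "b \<in> Bs" for b
    unfolding e_def u'_def using onb_proj_orth[OF Bs that] by (simp add: ip_sm_left)
  have "ip b e = 0" if "b \<in> Bs" for b using e_orth[OF that] ip_conj[of b e] by simp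
  hence onb: "orthonormal (insert e Bs)"
    using Bs(1) e_self e_orth unfolding orthonormal_def by blast
  have proj_in: "onb_proj Bs u \<in> cspan (insert x Bs)" for x
    using cspan_mono[of "insert x Bs" Bs] Bs(2) onb_proj_in by blast
  have "u \<in> cspan (insert u Bs)" using Bs(2) in_cspan by simp
  hence "u' \<in> cspan (insert u Bs)" unfolding u'_def using csub_diff[OF cspan_csub _ proj_in] by blast
  hence e_in: "e \<in> cspan (insert u Bs)" unfolding e_def using csub_sm[OF cspan_csub] by blast
  have "u' = sm (complex_of_real (norm u')) e" unfolding e_def using u'nz by (simp flip: sm_mult)
  moreover have "e \<in> cspan (insert e Bs)" using Bs(2) in_cspan by simp
  ultimately have "u' \<in> cspan (insert e Bs)" using csub_sm[OF cspan_csub] by metis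
  hence "u' + onb_proj Bs u \<in> cspan (insert e Bs)" using csub_add[OF cspan_csub _ proj_in] by blast
  hence "u \<in> cspan (insert e Bs)" unfolding u'_def by simp
  with onb e_in show ?thesis by (rule that)
qed

lemma cspan_exchange:
  assumes "finite S" "s \<notin> S" "u \<in> cspan (insert s S)" "u \<notin> cspan S" "v \<in> cspan (insert s S)"
  obtains k where "v - sm k u \<in> cspan S"
proof -
  obtain c where c: "u = sm (c s) s + (\<Sum>t\<in>S. sm (c t) t)"
    using assms(1-3) unfolding cspan_def by auto
  have cs: "c s \<noteq> 0" using assms(4) c unfolding cspan_def by auto
  obtain d where d: "v = sm (d s) s + (\<Sum>t\<in>S. sm (d t) t)"
    using assms(1,2,5) unfolding cspan_def by auto
  define k where "k = d s / c s"
  have "v - sm k u = (\<Sum>t\<in>S. sm (d t) t) - (\<Sum>t\<in>S. sm (k * c t) t)"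
    using d c cs unfolding k_def by (simp add: sm_add_right sm_sum sm_mult[symmetric])
  also have "\<dots> = (\<Sum>t\<in>S. sm (d t - k * c t) t)" by (simp add: sm_diff_left sum_subtractf)
  finally have "v - sm k u \<in> cspan S" unfolding cspan_def by (auto intro!: exI[of _ "\<lambda>t. d t - k * c t"])
  thus ?thesis by (rule that)
qed

lemma fin_dim_orthonormal_basis:
  assumes "csubspace sm V" "cfin_dim sm V"
  obtains Bs where "finite Bs" "orthonormal Bs" "Bs \<subseteq> V" "V = cspan Bs"
proof -
  obtain S where S: "finite S" "V \<subseteq> cspan S" using assms(2) cfin_dim_iff by blast
  have "\<exists>Bs. finite Bs \<and> orthonormal Bs \<and> Bs \<subseteq> V \<and> V = cspan Bs"
    using S(1) assms(1) S(2)
  proof (induction S arbitrary: V rule: finite_induct)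
    case empty
    have "cspan {} = {0}" unfolding cspan_def by simp
    hence "V = cspan {}" using empty.prems(2) csub_zero[OF empty.prems(1)] by auto
    thus ?case by (intro exI[of _ "{}"]) (auto simp: orthonormal_def)
  next
    case (insert s S V)
    define V' where "V' = V \<inter> cspan S"
    obtain Bs' where Bs': "finite Bs'" "orthonormal Bs'" "Bs' \<subseteq> V'" "V' = cspan Bs'"
      using insert.IH[of V'] csub_inter[OF insert.prems(1) cspan_csub] V'_def by blast
    show ?case
    proof (cases "V \<subseteq> cspan S")
      case True
      thus ?thesis using Bs' V'_def by (metis inf.absorb1)
    next
      case False
      then obtain u where u: "u \<in> V" "u \<notin> cspan S" by blast
      hence "u \<notin> cspan Bs'" using Bs'(4) V'_def by blast
      then obtain e where e: "orthonormal (insert e Bs')" "e \<in> cspan (insert u Bs')"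
        "u \<in> cspan (insert e Bs')" using gram_schmidt_step[OF Bs'(2,1)] by blast
      define Bs where "Bs = insert e Bs'"
      have "Bs' \<subseteq> V" using Bs'(3) V'_def by blast
      hence "cspan (insert u Bs') \<subseteq> V" using cspan_sub[OF insert.prems(1)] u(1) by blast
      hence BsV: "Bs \<subseteq> V" using e(2) \<open>Bs' \<subseteq> V\<close> Bs_def by blast
      have fin: "finite Bs" using Bs'(1) Bs_def by simp
      have "v \<in> cspan Bs" if v: "v \<in> V" for v
      proof -
        obtain k where k: "v - sm k u \<in> cspan S"
          using cspan_exchange[OF insert.hyps _ u(2)] insert.prems(2) u(1) v by blast
        have "v - sm k u \<in> V" using v u(1) insert.prems(1) csub_diff csub_sm by blast
        hence "v - sm k u \<in> cspan Bs" using k Bs'(4) V'_def cspan_mono[OF fin, of Bs'] Bs_def by blast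
        moreover have "sm k u \<in> cspan Bs" using e(3) csub_sm[OF cspan_csub] Bs_def by blast
        ultimately show ?thesis using csub_add[OF cspan_csub] by fastforce
      qed
      thus ?thesis using cspan_sub[OF insert.prems(1) BsV] fin e(1) BsV Bs_def by blast
    qed
  qed
  thus ?thesis using that by blast
qed

lemma proj_unique:
  assumes "csubspace sm V" "p \<in> V" "q \<in> V" "\<forall>w\<in>V. ip (y - p) w = 0" "\<forall>w\<in>V. ip (y - q) w = 0"
  shows "p = q"
proof -
  have "p - q \<in> V" using assms csub_diff by blast
  have "p - q = (y - q) - (y - p)" by simp
  hence "ip (p - q) (p - q) = ip (y - q) (p - q) - ip (y - p) (p - q)"
    by (metis ip_diff_left)
  hence "ip (p - q) (p - q) = 0" using assms(4,5) \<open>p - q \<in> V\<close> by simp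
  thus ?thesis using ip_self_zero_iff by simp
qed

lemma orthproj_eq: assumes "csubspace sm V" "p \<in> V" "\<forall>w\<in>V. ip (y - p) w = 0"
  shows "orthproj ip V y = p"
  unfolding orthproj_def by (rule the_equality) (use assms proj_unique in blast)+

lemma orthproj_fin_dim: assumes "csubspace sm V" "cfin_dim sm V"
  shows "orthproj ip V y \<in> V" "\<forall>w\<in>V. ip (y - orthproj ip V y) w = 0"
proof -
  obtain Bs where Bs: "finite Bs" "orthonormal Bs" "V = cspan Bs"
    using fin_dim_orthonormal_basis[OF assms] by blast
  have "orthproj ip V y = onb_proj Bs y"
    using orthproj_eq[OF assms(1)] onb_proj_in onb_proj_orth_span[OF Bs(2,1)] Bs(3) by simp
  thus "orthproj ip V y \<in> V" "\<forall>w\<in>V. ip (y - orthproj ip V y) w = 0"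
    using onb_proj_in onb_proj_orth_span[OF Bs(2,1)] Bs(3) by simp_all
qed

lemma orthproj_self: assumes "csubspace sm V" "v \<in> V" shows "orthproj ip V v = v"
  using orthproj_eq[OF assms] by simp

section \<open>Orthogonal projection onto closed subspaces\<close>

text \<open>A minimizing sequence for the distance from y to a subspace W is Cauchy
  (parallelogram law applied to y - w m and y - w n, whose midpoint lies in W).\<close>
lemma minimizing_sequence_Cauchy:
  assumes W: "csubspace sm W" and w: "\<And>n. w n \<in> W"
    and d: "\<And>v. v \<in> W \<Longrightarrow> d \<le> norm (y - v)" "d \<ge> 0"
    and close: "\<And>n. norm (y - w n) < d + inverse (real (Suc n))"
  shows "Cauchy w"
proof -
  define i where "i n = inverse (real (Suc n))" for n
  define K where "K = 2 * d + 1"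
  have K0: "K > 0" unfolding K_def using d(2) by simp
  have i0: "0 < i n" "i n \<le> 1" for n unfolding i_def by (auto simp: field_simps)
  have sq: "(norm (y - w n))\<^sup>2 \<le> d\<^sup>2 + K * i n" for n
  proof -
    have "(norm (y - w n))\<^sup>2 \<le> (d + i n)\<^sup>2" using close[of n] unfolding i_def
      by (intro power_mono) auto
    also have "\<dots> = d\<^sup>2 + 2 * d * i n + i n * i n" by (simp add: power2_eq_square algebra_simps)
    also have "\<dots> \<le> d\<^sup>2 + K * i n" unfolding K_def using i0[of n] d(2)
      by (simp add: algebra_simps mult_left_le)
    finally show ?thesis .
  qed
  have dist_sq: "(norm (w m - w n))\<^sup>2 \<le> 2 * K * (i n + i m)" for m n
  proof -
    define mid where "mid = (1/2) *\<^sub>R (w n + w m)"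
    have "mid \<in> W" unfolding mid_def using csub_scaleR[OF W] csub_add[OF W w w] by blast
    moreover have "(y - w n) + (y - w m) = 2 *\<^sub>R (y - mid)"
      unfolding mid_def by (simp add: algebra_simps scaleR_2)
    ultimately have "(norm ((y - w n) + (y - w m)))\<^sup>2 \<ge> 4 * d\<^sup>2"
      using d by (simp add: power2_eq_square mult_mono)
    thus ?thesis using parallelogram[of "y - w n" "y - w m"] sq[of n] sq[of m]
      by (simp add: algebra_simps)
  qed
  show "Cauchy w"
  proof (rule metric_CauchyI)
    fix e :: real assume e: "e > 0"
    then obtain N where N: "inverse (real (Suc N)) < e\<^sup>2 / (4 * K)"
      using reals_Archimedean K0 by (metis divide_pos_pos zero_less_mult_iff zero_less_numeral zero_less_power)
    have "dist (w m) (w n) < e" if mn: "N \<le> m" "N \<le> n" for m n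
    proof -
      have mono: "i k \<le> i N" if "N \<le> k" for k unfolding i_def using that by (simp add: le_imp_inverse_le)
      have "(norm (w m - w n))\<^sup>2 \<le> 2 * K * (i n + i m)" by (rule dist_sq)
      also have "\<dots> \<le> 2 * K * (i N + i N)" using mono mn K0 by (intro mult_left_mono add_mono) auto
      also have "\<dots> < e\<^sup>2" using N K0 unfolding i_def by (simp add: field_simps)
      finally have "norm (w m - w n) < e" using e by (simp add: power_less_imp_less_base)
      thus ?thesis by (simp add: dist_norm)
    qed
    thus "\<exists>M. \<forall>m\<ge>M. \<forall>n\<ge>M. dist (w m) (w n) < e" by blast
  qed
qed

lemma nearest_point_exists:
  assumes W: "csubspace sm W" "closed W"
  obtains p where "p \<in> W" "\<And>v. v \<in> W \<Longrightarrow> norm (y - p) \<le> norm (y - v)"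
proof -
  define d where "d = Inf ((\<lambda>w. norm (y - w)) ` W)"
  have ne: "(\<lambda>w. norm (y - w)) ` W \<noteq> {}" using csub_zero[OF W(1)] by blast
  have bdd: "bdd_below ((\<lambda>w. norm (y - w)) ` W)" by (rule bdd_belowI[of _ 0]) auto
  have dle: "d \<le> norm (y - v)" if "v \<in> W" for v unfolding d_def using that bdd by (simp add: cInf_lower)
  have d0: "d \<ge> 0" unfolding d_def by (rule cInf_greatest[OF ne]) auto
  have "\<forall>n. \<exists>w. w \<in> W \<and> norm (y - w) < d + inverse (real (Suc n))"
  proof
    fix n :: nat
    have "d < d + inverse (real (Suc n))" by simp
    thus "\<exists>w. w \<in> W \<and> norm (y - w) < d + inverse (real (Suc n))"
      using cInf_lessD[OF ne] unfolding d_def by blast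
  qed
  then obtain w where w: "\<And>n. w n \<in> W" "\<And>n. norm (y - w n) < d + inverse (real (Suc n))"
    by metis
  obtain p where p: "w \<longlonglongrightarrow> p"
    using minimizing_sequence_Cauchy[OF W(1) w(1) dle d0 w(2)] Cauchy_convergent convergent_def by blast
  have pW: "p \<in> W" using closed_sequentially[OF W(2) _ p] w(1) by blast
  have "(\<lambda>n. norm (y - w n)) \<longlonglongrightarrow> norm (y - p)" by (intro tendsto_intros p)
  moreover have "(\<lambda>n. d + inverse (real (Suc n))) \<longlonglongrightarrow> d" by (rule LIMSEQ_inverse_real_of_nat_add)
  ultimately have "norm (y - p) \<le> d" using w(2) by (intro LIMSEQ_le) (auto intro: less_imp_le)
  thus ?thesis using that pW dle by fastforce
qed

text \<open>The residual of a nearest point is orthogonal to the subspace (first variation of the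
  distance in the direction of ip (y - p) v *v).\<close>
lemma nearest_point_orth:
  assumes W: "csubspace sm W" and p: "p \<in> W" "\<And>v. v \<in> W \<Longrightarrow> norm (y - p) \<le> norm (y - v)"
    and v: "v \<in> W"
  shows "ip (y - p) v = 0"
proof -
  define c where "c = ip (y - p) v"
  define u where "u = sm c v"
  define L where "L = (norm u)\<^sup>2"
  have uW: "u \<in> W" unfolding u_def using csub_sm[OF W v] .
  have "ip (y - p) u = cnj c * c" unfolding u_def c_def by (rule ip_sm_right)
  also have "\<dots> = complex_of_real ((cmod c)\<^sup>2)" by (simp only: complex_norm_square mult.commute)
  finally have ipu: "ip (y - p) u = complex_of_real ((cmod c)\<^sup>2)" .
  have ineq: "2 * (cmod c)\<^sup>2 \<le> t * L" if t: "t > 0" for t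
  proof -
    have "p + t *\<^sub>R u \<in> W" using csub_add[OF W p(1) csub_scaleR[OF W uW]] .
    hence "(norm (y - p))\<^sup>2 \<le> (norm ((y - p) - t *\<^sub>R u))\<^sup>2"
      using p(2) by (simp add: diff_diff_eq power_mono del: power_mono_iff)
    also have "\<dots> = (norm (y - p))\<^sup>2 - 2 * (t * (cmod c)\<^sup>2) + t\<^sup>2 * L"
      unfolding norm_diff_sq ip_scaleR_right ipu L_def using t
      by (simp add: power_mult_distrib flip: of_real_mult)
    finally have "t * (2 * (cmod c)\<^sup>2) \<le> t * (t * L)" by (simp add: power2_eq_square algebra_simps)
    thus ?thesis using t by simp
  qed
  have "(cmod c)\<^sup>2 \<le> 0"
  proof (rule ccontr)
    assume "\<not> (cmod c)\<^sup>2 \<le> 0"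
    hence pos: "(cmod c)\<^sup>2 > 0" by simp
    have L0: "L \<ge> 0" unfolding L_def by simp
    define t where "t = (cmod c)\<^sup>2 / (L + 1)"
    have t0: "t > 0" unfolding t_def using pos L0 by simp
    have "t * L < (cmod c)\<^sup>2" unfolding t_def using pos L0 by (simp add: field_simps)
    thus False using ineq[OF t0] pos by simp
  qed
  thus ?thesis using c_def by simp
qed

lemma proj_closed:
  assumes "csubspace sm W" "closed W"
  obtains p where "p \<in> W" "\<And>v. v \<in> W \<Longrightarrow> ip (y - p) v = 0"
  using nearest_point_exists[OF assms] nearest_point_orth[OF assms(1)] by metis

section \<open>Bounded self-adjoint operators, quadratic forms, approximate eigenvalues\<close>

definition bounded_sa :: "('a \<Rightarrow> 'a) \<Rightarrow> bool" where
  "bounded_sa B \<longleftrightarrow> (\<forall>x y. B (x + y) = B x + B y) \<and> (\<forall>a x. B (sm a x) = sm a (B x)) \<and>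
     (\<exists>C. \<forall>x. norm (B x) \<le> C * norm x) \<and> (\<forall>x y. ip (B x) y = ip x (B y))"

definition qform :: "('a \<Rightarrow> 'a) \<Rightarrow> 'a \<Rightarrow> real" where
  "qform B x = Re (ip (B x) x)"

definition approx_eig :: "'a set \<Rightarrow> ('a \<Rightarrow> 'a) \<Rightarrow> real \<Rightarrow> bool" where
  "approx_eig U B s \<longleftrightarrow> (\<forall>e>0. \<exists>x\<in>U. norm x = 1 \<and> norm (B x - s *\<^sub>R x) < e)"

definition bdd_inv :: "('a \<Rightarrow> 'a) \<Rightarrow> bool" where
  "bdd_inv f \<longleftrightarrow> bij f \<and> (\<exists>C. \<forall>x. norm x \<le> C * norm (f x))"

lemma bsa_add: "bounded_sa B \<Longrightarrow> B (x + y) = B x + B y" unfolding bounded_sa_def by blast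
lemma bsa_sm: "bounded_sa B \<Longrightarrow> B (sm a x) = sm a (B x)" unfolding bounded_sa_def by blast
lemma bsa_sym: "bounded_sa B \<Longrightarrow> ip (B x) y = ip x (B y)" unfolding bounded_sa_def by blast

lemma positive_bound:
  fixes g h :: "'a \<Rightarrow> real"
  assumes "\<And>x. g x \<le> C * h x" "\<And>x. h x \<ge> 0"
  obtains C' where "C' > 0" "\<And>x. g x \<le> C' * h x"
proof -
  have "g x \<le> max C 1 * h x" for x
    using assms[of x] by (meson max.cobounded1 mult_right_mono order_trans)
  thus ?thesis using that[of "max C 1"] by simp
qed

lemma bsa_bound: assumes "bounded_sa B" obtains C where "C > 0" "\<And>x. norm (B x) \<le> C * norm x"
proof -
  obtain C where C: "\<And>x. norm (B x) \<le> C * norm x" using assms unfolding bounded_sa_def by blast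
  show ?thesis using positive_bound[where g="\<lambda>x. norm (B x)" and h=norm, OF C norm_ge_zero] that by blast
qed

lemma bsa_scaleR: "bounded_sa B \<Longrightarrow> B (r *\<^sub>R x) = r *\<^sub>R B x"
  using bsa_sm[of B "complex_of_real r" x] by (simp add: sm_real)

lemma bsa_bounded_linear: assumes "bounded_sa B" shows "bounded_linear B"
proof -
  obtain C where C: "C > 0" "\<And>x. norm (B x) \<le> C * norm x" using bsa_bound[OF assms] by blast
  show ?thesis
    by (rule bounded_linear_intro[where K=C])
      (use C bsa_add[OF assms] bsa_scaleR[OF assms] in \<open>auto simp: mult.commute\<close>)
qed

lemma bsa_zero: "bounded_sa B \<Longrightarrow> B 0 = 0"
  using linear_0[OF bounded_linear.linear[OF bsa_bounded_linear]] by blast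
lemma bsa_diff: "bounded_sa B \<Longrightarrow> B (x - y) = B x - B y"
  using linear_diff[OF bounded_linear.linear[OF bsa_bounded_linear]] by blast

lemma bsa_shift: assumes "bounded_sa B" shows "bounded_sa (\<lambda>x. B x - s *\<^sub>R x)"
proof -
  obtain C where C: "\<And>x. norm (B x) \<le> C * norm x" using bsa_bound[OF assms] by blast
  have "norm (B x - s *\<^sub>R x) \<le> (C + \<bar>s\<bar>) * norm x" for x
    using C[of x] norm_triangle_ineq4[of "B x" "s *\<^sub>R x"] by (simp add: algebra_simps)
  thus ?thesis unfolding bounded_sa_def using bsa_add[OF assms] bsa_sm[OF assms] bsa_sym[OF assms]
    by (auto simp: algebra_simps sm_diff_right sm_scaleR_comm ip_diff_left ip_diff_right
        ip_scaleR_left ip_scaleR_right intro!: exI[of _ "C + \<bar>s\<bar>"])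
qed

lemma bsa_neg: assumes "bounded_sa B" shows "bounded_sa (\<lambda>x. - B x)"
proof -
  obtain C where "\<And>x. norm (B x) \<le> C * norm x" using bsa_bound[OF assms] by blast
  thus ?thesis unfolding bounded_sa_def using bsa_add[OF assms] bsa_sm[OF assms] bsa_sym[OF assms]
    by (auto simp: sm_minus_right ip_minus_left ip_minus_right)
qed

lemma unit_sign_cases: "\<bar>\<sigma>::real\<bar> = 1 \<Longrightarrow> \<sigma> = 1 \<or> \<sigma> = -1"
  by (auto simp: abs_if split: if_splits)

lemma bsa_sign: assumes "bounded_sa B" "\<bar>\<sigma>\<bar> = 1" shows "bounded_sa (\<lambda>x. \<sigma> *\<^sub>R B x)"
  using unit_sign_cases[OF assms(2)] bsa_neg[OF assms(1)] assms(1) by auto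

lemma bsa_sq: assumes "bounded_sa B" shows "bounded_sa (\<lambda>x. B (B x))"
proof -
  obtain C where C: "C > 0" "\<And>x. norm (B x) \<le> C * norm x" using bsa_bound[OF assms] by blast
  have "norm (B (B x)) \<le> (C * C) * norm x" for x
    using C(2)[of "B x"] C(2)[of x] C(1) by (metis mult.assoc mult_left_mono order_trans less_imp_le)
  thus ?thesis unfolding bounded_sa_def using bsa_add[OF assms] bsa_sm[OF assms] bsa_sym[OF assms]
    by auto
qed

lemma qform_scaleR: assumes "bounded_sa B" shows "qform B (r *\<^sub>R x) = r\<^sup>2 * qform B x"
  unfolding qform_def using bsa_scaleR[OF assms]
  by (simp add: ip_scaleR_left ip_scaleR_right power2_eq_square)

lemma qform_shift: "qform (\<lambda>x. B x - s *\<^sub>R x) x = qform B x - s * (norm x)\<^sup>2"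
  unfolding qform_def by (simp add: ip_diff_left ip_scaleR_left ip_self)

lemma qform_neg: "qform (\<lambda>x. - B x) x = - qform B x"
  unfolding qform_def by (simp add: ip_minus_left)

lemma qform_bound: "\<bar>qform B x\<bar> \<le> norm (B x) * norm x"
  unfolding qform_def using cauchy_schwarz[of "B x" x] abs_Re_le_cmod order_trans by blast

lemma qform_polar: assumes "bounded_sa B"
  shows "qform B (x + y) - qform B (x - y) = 4 * Re (ip (B x) y)"
proof -
  have "ip (B y) x = cnj (ip (B x) y)"
    using bsa_sym[OF assms, of y x] ip_conj[of x "B y"] ip_conj[of y "B x"] by simp
  thus ?thesis unfolding qform_def
    by (simp add: bsa_add[OF assms] bsa_diff[OF assms] ip_add_left ip_add_right ip_diff_left ip_diff_right)
qed

lemma norm_le_numerical_radius: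
  assumes "bounded_sa B" "\<And>x. \<bar>qform B x\<bar> \<le> N * (norm x)\<^sup>2"
  shows "norm (B x) \<le> N * norm x"
proof (cases "B x = 0")
  case True
  have "0 \<le> N * (norm x)\<^sup>2" using assms(2)[of x] by (meson abs_ge_zero order_trans)
  hence "0 \<le> N * norm x" by (cases "x = 0") (auto simp: zero_le_mult_iff)
  thus ?thesis using True by simp
next
  case False
  define y where "y = (norm x / norm (B x)) *\<^sub>R B x"
  have ny: "norm y = norm x" unfolding y_def using False by simp
  have "Re (ip (B x) y) = norm x * norm (B x)" unfolding y_def using False
    by (simp add: ip_scaleR_right ip_self power2_eq_square)
  hence "4 * (norm x * norm (B x)) = qform B (x + y) - qform B (x - y)"
    using qform_polar[OF assms(1)] by simp
  also have "\<dots> \<le> N * (norm (x + y))\<^sup>2 + N * (norm (x - y))\<^sup>2"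
    using assms(2)[of "x + y"] assms(2)[of "x - y"] by (simp add: abs_le_iff)
  also have "\<dots> = N * (2 * (norm x)\<^sup>2 + 2 * (norm y)\<^sup>2)"
    unfolding parallelogram[of x y, symmetric] by (simp add: algebra_simps)
  also have "\<dots> = 4 * (N * norm x * norm x)" using ny by (simp add: power2_eq_square)
  finally have *: "norm x * norm (B x) \<le> N * norm x * norm x" by simp
  have "x \<noteq> 0" using False bsa_zero[OF assms(1)] by auto
  thus ?thesis using * by (simp add: mult.commute)
qed

lemma nonneg_operator_bound:
  assumes P: "bounded_sa P" and U: "csubspace sm U" "\<And>z. z \<in> U \<Longrightarrow> P z \<in> U"
    and pos: "\<And>z. z \<in> U \<Longrightarrow> qform P z \<ge> 0"
    and C: "C > 0" "\<And>z. norm (P z) \<le> C * norm z" and x: "x \<in> U"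
  shows "(norm (P x))\<^sup>2 \<le> C * qform P x"
proof -
  define t where "t = 1 / C"
  have "x - t *\<^sub>R P x \<in> U" using csub_diff[OF U(1) x csub_scaleR[OF U(1) U(2)[OF x]]] .
  hence "0 \<le> qform P (x - t *\<^sub>R P x)" using pos by blast
  also have "qform P (x - t *\<^sub>R P x) = qform P x - 2 * t * (norm (P x))\<^sup>2 + t\<^sup>2 * qform P (P x)"
    using bsa_sym[OF P, of "P x" x] unfolding qform_def
    by (simp add: bsa_diff[OF P] bsa_scaleR[OF P] ip_diff_left ip_diff_right
        ip_scaleR_left ip_scaleR_right ip_self power2_eq_square algebra_simps)
  also have "qform P (P x) \<le> C * (norm (P x))\<^sup>2"
    using qform_bound[of P "P x"] mult_right_mono[OF C(2)[of "P x"], of "norm (P x)"]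
    by (simp add: power2_eq_square mult.assoc)
  finally have "0 \<le> qform P x - 2 * t * (norm (P x))\<^sup>2 + t\<^sup>2 * (C * (norm (P x))\<^sup>2)"
    by (simp add: mult_left_mono)
  also have "t\<^sup>2 * (C * (norm (P x))\<^sup>2) = t * (norm (P x))\<^sup>2" unfolding t_def using C(1)
    by (simp add: power2_eq_square)
  finally have "t * (norm (P x))\<^sup>2 \<le> qform P x" by simp
  thus ?thesis unfolding t_def using C(1) by (simp add: field_simps)
qed

text \<open>The supremum M of the quadratic form of B over the unit sphere of a nonzero invariant
  subspace U bounds the form and is an approximate eigenvalue of B along U
  (apply the previous lemma to the nonnegative operator M - B).\<close>
lemma sup_qform_approx_eig:
  assumes B: "bounded_sa B" and U: "csubspace sm U" "\<And>z. z \<in> U \<Longrightarrow> B z \<in> U"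
    and ne: "x0 \<in> U" "x0 \<noteq> 0"
  defines "M \<equiv> Sup ((\<lambda>x. qform B x) ` {x\<in>U. norm x = 1})"
  shows "\<And>x. x \<in> U \<Longrightarrow> qform B x \<le> M * (norm x)\<^sup>2" and "approx_eig U B M"
proof -
  obtain C where C: "C > 0" "\<And>x. norm (B x) \<le> C * norm x" using bsa_bound[OF B] by blast
  define S where "S = (\<lambda>x. qform B x) ` {x\<in>U. norm x = 1}"
  have unit: "(1 / norm x) *\<^sub>R x \<in> U \<and> norm ((1 / norm x) *\<^sub>R x) = 1" if "x \<in> U" "x \<noteq> 0" for x
    using that csub_scaleR[OF U(1)] by simp
  have Sne: "S \<noteq> {}" unfolding S_def using unit[OF ne] by blast
  have Sbdd: "bdd_above S" unfolding S_def
  proof (rule bdd_aboveI2[where M=C])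
    fix x assume "x \<in> {x \<in> U. norm x = 1}"
    thus "qform B x \<le> C" using qform_bound[of B x] C(2)[of x] by (simp add: abs_le_iff)
  qed
  show up: "qform B x \<le> M * (norm x)\<^sup>2" if x: "x \<in> U" for x
  proof (cases "x = 0")
    case True thus ?thesis unfolding qform_def by simp
  next
    case False
    define u where "u = (1 / norm x) *\<^sub>R x"
    have "qform B u \<in> S" unfolding S_def u_def using unit[OF x False] by blast
    hence "qform B u \<le> M" unfolding M_def S_def[symmetric] using Sbdd by (simp add: cSup_upper)
    moreover have "qform B x = (norm x)\<^sup>2 * qform B u"
      using qform_scaleR[OF B, of "norm x" u] False unfolding u_def by simp
    ultimately show ?thesis using mult_left_mono[of "qform B u" M "(norm x)\<^sup>2"] by (simp add: mult.commute)
  qed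
  define P where "P = (\<lambda>x. - (B x - M *\<^sub>R x))"
  have P: "bounded_sa P" unfolding P_def by (rule bsa_neg[OF bsa_shift[OF B]])
  obtain CP where CP: "CP > 0" "\<And>x. norm (P x) \<le> CP * norm x" using bsa_bound[OF P] by blast
  have qP: "qform P z = M * (norm z)\<^sup>2 - qform B z" for z unfolding P_def qform_neg qform_shift by simp
  have PU: "P z \<in> U" if "z \<in> U" for z unfolding P_def
    using U(2)[OF that] that csub_minus[OF U(1)] csub_diff[OF U(1)] csub_scaleR[OF U(1)] by blast
  have Ppos: "qform P z \<ge> 0" if "z \<in> U" for z using up[OF that] qP by simp
  show "approx_eig U B M" unfolding approx_eig_def
  proof (intro allI impI)
    fix e :: real assume e: "e > 0"
    have "M - e\<^sup>2 / CP < M" using e CP by simp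
    then obtain x where x: "x \<in> U" "norm x = 1" "M - e\<^sup>2 / CP < qform B x"
      using less_cSup_iff[OF Sne Sbdd] unfolding M_def S_def by blast
    have "qform P x < e\<^sup>2 / CP" using qP[of x] x by simp
    hence "CP * qform P x < e\<^sup>2" using CP by (simp add: field_simps)
    moreover have "(norm (P x))\<^sup>2 \<le> CP * qform P x"
      by (rule nonneg_operator_bound[OF P U(1) PU Ppos CP x(1)])
    ultimately have "(norm (P x))\<^sup>2 < e\<^sup>2" by simp
    hence "norm (P x) < e" using e by (simp add: power_less_imp_less_base)
    hence "norm (B x - M *\<^sub>R x) < e" unfolding P_def by (simp add: norm_minus_commute)
    thus "\<exists>x\<in>U. norm x = 1 \<and> norm (B x - M *\<^sub>R x) < e" using x by blast
  qed
qed

lemma approx_eig_neg: "approx_eig U (\<lambda>x. - T x) M \<Longrightarrow> approx_eig U T (- M)"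
  unfolding approx_eig_def by (simp add: norm_minus_commute[of "- T _"] add.commute)

lemma bdd_inv_pos: assumes "bdd_inv f" obtains C where "C > 0" "\<And>x. norm x \<le> C * norm (f x)"
proof -
  obtain C where C: "\<And>x. norm x \<le> C * norm (f x)" using assms unfolding bdd_inv_def by blast
  show ?thesis using positive_bound[where g=norm and h="\<lambda>x. norm (f x)", OF C norm_ge_zero] that by blast
qed

lemma bounded_below_not_approx_eig:
  assumes "C > 0" "\<And>x. norm x \<le> C * norm (B x - s *\<^sub>R x)" shows "\<not> approx_eig U B s"
proof
  assume "approx_eig U B s"
  moreover have "1 / C > 0" using assms(1) by simp
  ultimately obtain x where x: "norm x = 1" "norm (B x - s *\<^sub>R x) < 1 / C"
    unfolding approx_eig_def by blast
  have "1 \<le> C * norm (B x - s *\<^sub>R x)" using assms(2)[of x] x(1) by simp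
  also have "\<dots> < C * (1 / C)" using x(2) assms(1) by (intro mult_strict_left_mono) auto
  finally show False using assms(1) by simp
qed

lemma bdd_inv_not_approx_eig: assumes "bdd_inv (\<lambda>x. B x - s *\<^sub>R x)" shows "\<not> approx_eig U B s"
  using bdd_inv_pos[OF assms] bounded_below_not_approx_eig by metis

lemma bdd_inv_comp: assumes "bdd_inv f" "bdd_inv g" shows "bdd_inv (\<lambda>x. f (g x))"
proof -
  obtain C where C: "C > 0" "\<And>x. norm x \<le> C * norm (f x)" using bdd_inv_pos[OF assms(1)] by blast
  obtain D where D: "D > 0" "\<And>x. norm x \<le> D * norm (g x)" using bdd_inv_pos[OF assms(2)] by blast
  have "norm x \<le> (D * C) * norm (f (g x))" for x
    using D(2)[of x] C(2)[of "g x"] D(1) by (metis mult.assoc mult_left_mono order_trans less_imp_le)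
  moreover have "bij (\<lambda>x. f (g x))" using assms bij_comp[of g f] unfolding bdd_inv_def comp_def by blast
  ultimately show ?thesis unfolding bdd_inv_def by blast
qed

lemma bdd_inv_scale: assumes "bdd_inv f" "c \<noteq> 0" shows "bdd_inv (\<lambda>x. c *\<^sub>R f x)"
proof -
  obtain C where C: "\<And>x. norm x \<le> C * norm (f x)" using bdd_inv_pos[OF assms(1)] by blast
  have bf: "bij f" using assms(1) unfolding bdd_inv_def by blast
  have "bij (\<lambda>x. c *\<^sub>R f x)"
  proof (rule bijI)
    show "inj (\<lambda>x. c *\<^sub>R f x)" using bij_is_inj[OF bf] assms(2) by (auto simp: inj_def)
    show "surj (\<lambda>x. c *\<^sub>R f x)"
    proof (rule surjI)
      fix y show "c *\<^sub>R f (inv f ((1 / c) *\<^sub>R y)) = y"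
        using bf assms(2) by (simp add: bij_is_surj surj_f_inv_f)
    qed
  qed
  moreover have "norm x \<le> (C / \<bar>c\<bar>) * norm (c *\<^sub>R f x)" for x using C[of x] assms(2) by simp
  ultimately show ?thesis unfolding bdd_inv_def by blast
qed

lemma approx_eig_inverse:
  assumes B: "bounded_sa B" and inv: "\<And>x. B (G x) - w *\<^sub>R G x = x"
    and ap: "approx_eig UNIV G \<mu>" and mu: "\<mu> \<noteq> 0"
  shows "approx_eig UNIV B (w + 1 / \<mu>)"
  unfolding approx_eig_def
proof (intro allI impI)
  fix e :: real assume e: "e > 0"
  define m where "m = \<bar>\<mu>\<bar>"
  have m: "m > 0" unfolding m_def using mu by simp
  define ep where "ep = min (m / 2) (e * m * m / 2)"
  have ep: "ep > 0" unfolding ep_def using m e by simp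
  obtain x where x: "norm x = 1" "norm (G x - \<mu> *\<^sub>R x) < ep" using ap ep unfolding approx_eig_def by blast
  define y where "y = G x"
  have ny: "norm y \<ge> m / 2"
  proof -
    have "norm (\<mu> *\<^sub>R x) \<le> norm y + norm (G x - \<mu> *\<^sub>R x)"
      using norm_triangle_ineq4[of y "G x - \<mu> *\<^sub>R x"] unfolding y_def by simp
    thus ?thesis using x unfolding m_def ep_def by simp
  qed
  have "B y - (w + 1 / \<mu>) *\<^sub>R y = - ((1 / \<mu>) *\<^sub>R (G x - \<mu> *\<^sub>R x))"
    using inv[of x] mu unfolding y_def by (simp add: algebra_simps)
  hence "norm (B y - (w + 1 / \<mu>) *\<^sub>R y) = norm (G x - \<mu> *\<^sub>R x) / m"
    unfolding m_def by (simp add: divide_inverse)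
  hence nBy: "norm (B y - (w + 1 / \<mu>) *\<^sub>R y) < ep / m" using x(2) m
    by (simp add: divide_strict_right_mono)
  define z where "z = (1 / norm y) *\<^sub>R y"
  have y0: "norm y > 0" using ny m by linarith
  have nz: "norm z = 1" unfolding z_def using y0 by simp
  have "B z - (w + 1 / \<mu>) *\<^sub>R z = (1 / norm y) *\<^sub>R (B y - (w + 1 / \<mu>) *\<^sub>R y)"
    unfolding z_def using bsa_scaleR[OF B] by (simp add: algebra_simps)
  hence "norm (B z - (w + 1 / \<mu>) *\<^sub>R z) = norm (B y - (w + 1 / \<mu>) *\<^sub>R y) / norm y" by simp
  also have "\<dots> \<le> norm (B y - (w + 1 / \<mu>) *\<^sub>R y) / (m / 2)"
    using ny m y0 by (intro divide_left_mono) auto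
  also have "\<dots> < (ep / m) / (m / 2)"
    using nBy m by (intro divide_strict_right_mono) auto
  also have "\<dots> \<le> e" unfolding ep_def using m e by (simp add: field_simps)
  finally show "\<exists>x\<in>UNIV. norm x = 1 \<and> norm (B x - (w + 1 / \<mu>) *\<^sub>R x) < e" using nz by blast
qed

section \<open>Lower bounds from spectral gaps\<close>

lemma bdd_inv_inverse:
  assumes f: "bounded_sa f" "bdd_inv f"
  shows "bounded_sa (inv f)" "\<And>y. f (inv f y) = y" "\<And>x. inv f (f x) = x"
proof -
  have bij: "bij f" using f(2) unfolding bdd_inv_def by blast
  show fG: "f (inv f y) = y" for y using bij by (simp add: bij_is_surj surj_f_inv_f)
  show Gf: "inv f (f x) = x" for x using bij by (simp add: bij_is_inj inv_f_f)
  obtain C where C: "\<And>x. norm x \<le> C * norm (f x)" using bdd_inv_pos[OF f(2)] by blast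
  show "bounded_sa (inv f)" unfolding bounded_sa_def
  proof (intro conjI allI exI)
    fix x y show "inv f (x + y) = inv f x + inv f y" by (metis Gf fG bsa_add[OF f(1)])
  next
    fix a x show "inv f (sm a x) = sm a (inv f x)" by (metis Gf fG bsa_sm[OF f(1)])
  next
    fix x show "norm (inv f x) \<le> C * norm x" using C[of "inv f x"] fG by simp
  next
    fix x y show "ip (inv f x) y = ip x (inv f y)" using bsa_sym[OF f(1), of "inv f x" "inv f y"] fG by simp
  qed
qed

lemma approx_eig_inverse_bound:
  assumes B: "bounded_sa B" and inv: "\<And>x. B (G x) - w *\<^sub>R G x = x" and d: "d > 0"
    and na: "\<And>s. \<bar>s - w\<bar> < d \<Longrightarrow> \<not> approx_eig UNIV B s"
    and ap: "approx_eig UNIV G \<mu>"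
  shows "\<bar>\<mu>\<bar> \<le> 1 / d"
proof (rule ccontr)
  assume "\<not> \<bar>\<mu>\<bar> \<le> 1 / d"
  hence big: "\<bar>\<mu>\<bar> > 1 / d" by simp
  hence mu: "\<mu> \<noteq> 0" using d by (metis abs_zero divide_pos_pos not_less_iff_gr_or_eq zero_less_one)
  hence "approx_eig UNIV B (w + 1 / \<mu>)" using approx_eig_inverse[OF B inv ap] by blast
  moreover have "\<bar>(w + 1 / \<mu>) - w\<bar> < d"
    using big d mu by (simp add: abs_divide divide_less_eq mult.commute)
  ultimately show False using na by blast
qed

text \<open>Both extreme values of the quadratic
  form of the inverse are approximate eigenvalues, hence bounded by 1/d.\<close>
lemma resolvent_bound:
  assumes B: "bounded_sa B" and iv: "bdd_inv (\<lambda>x. B x - w *\<^sub>R x)" and d: "d > 0"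
    and na: "\<And>s. \<bar>s - w\<bar> < d \<Longrightarrow> \<not> approx_eig UNIV B s"
  shows "d * norm x \<le> norm (B x - w *\<^sub>R x)"
proof (cases "x = 0")
  case True thus ?thesis by simp
next
  case x0: False
  define f where "f = (\<lambda>x. B x - w *\<^sub>R x)"
  define G where "G = inv f"
  have fb: "bounded_sa f" unfolding f_def by (rule bsa_shift[OF B])
  note G = bdd_inv_inverse[OF fb iv[folded f_def], folded G_def]
  have inv: "B (G y) - w *\<^sub>R G y = y" for y using G(2) unfolding f_def .
  have U: "csubspace sm (UNIV::'a set)" unfolding csubspace_def by blast
  have upper: "qform G y \<le> (1 / d) * (norm y)\<^sup>2" for y
  proof -
    note sup = sup_qform_approx_eig[OF G(1) U UNIV_I UNIV_I x0]
    have "qform G y \<le> Sup ((\<lambda>x. qform G x) ` {x\<in>UNIV. norm x = 1}) * (norm y)\<^sup>2" by (rule sup(1)) simp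
    moreover have "Sup ((\<lambda>x. qform G x) ` {x\<in>UNIV. norm x = 1}) \<le> 1 / d"
      using approx_eig_inverse_bound[OF B inv d na sup(2)] by simp
    ultimately show ?thesis by (meson mult_right_mono order_trans zero_le_power2)
  qed
  have lower: "- qform G y \<le> (1 / d) * (norm y)\<^sup>2" for y
  proof -
    note sup = sup_qform_approx_eig[OF bsa_neg[OF G(1)] U UNIV_I UNIV_I x0]
    let ?M = "Sup ((\<lambda>x. qform (\<lambda>x. - G x) x) ` {x\<in>UNIV. norm x = 1})"
    have "- qform G y \<le> ?M * (norm y)\<^sup>2" using sup(1)[of y] by (simp add: qform_neg)
    moreover have "?M \<le> 1 / d"
      using approx_eig_inverse_bound[OF B inv d na approx_eig_neg[OF sup(2)]] by simp
    ultimately show ?thesis by (meson mult_right_mono order_trans zero_le_power2)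
  qed
  have "\<bar>qform G y\<bar> \<le> (1 / d) * (norm y)\<^sup>2" for y
    using upper[of y] lower[of y] by (simp add: abs_le_iff)
  hence "norm (G y) \<le> (1 / d) * norm y" for y by (rule norm_le_numerical_radius[OF G(1)])
  from this[of "f x"] have "norm x \<le> (1 / d) * norm (f x)" using G(3) by simp
  thus ?thesis unfolding f_def using d by (simp add: field_simps)
qed

lemma csub_range: assumes "bounded_sa S" shows "csubspace sm (range S)"
  unfolding csubspace_def
proof (intro conjI ballI allI)
  show "0 \<in> range S" using rangeI[of S 0] bsa_zero[OF assms] by simp
next
  fix u v assume "u \<in> range S" "v \<in> range S"
  then obtain u' v' where "u = S u'" "v = S v'" by blast
  hence "u + v = S (u' + v')" using bsa_add[OF assms] by simp
  thus "u + v \<in> range S" by simp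
next
  fix a u assume "u \<in> range S"
  then obtain u' where "u = S u'" by blast
  hence "sm a u = S (sm a u')" using bsa_sm[OF assms] by simp
  thus "sm a u \<in> range S" by simp
qed

lemma orth_kernel_in_closure_range:
  assumes Sb: "bounded_sa S" and xo: "\<And>k. S k = 0 \<Longrightarrow> ip x k = 0"
  shows "x \<in> closure (range S)"
proof -
  obtain p where p: "p \<in> closure (range S)" "\<And>v. v \<in> closure (range S) \<Longrightarrow> ip (x - p) v = 0"
    using proj_closed[OF csub_closure[OF csub_range[OF Sb]]] by blast
  have "ip (S (x - p)) z = 0" for z
    using p(2)[of "S z"] closure_subset[of "range S"] bsa_sym[OF Sb, of "x - p" z] by auto
  hence "S (x - p) = 0" using ip_zero_all by blast
  hence "ip x (x - p) = 0" by (rule xo)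
  moreover have "ip p (x - p) = 0" using p ip_conj[of "x - p" p] by simp
  ultimately have "ip (x - p) (x - p) = 0" by (simp add: ip_diff_left)
  thus ?thesis using p(1) ip_self_zero_iff by simp
qed

text \<open>If T - s is invertible for 0 < |s - w| < eta, then S = T - w satisfies
  eta * norm (S y) \<le> norm (S (S y)): apply the resolvent estimate to S^2 at eta^2/2, noting
  that S^2 - a^2 = (T - (w + a)) (T - (w - a)).\<close>
lemma punctured_gap_estimate:
  assumes T: "bounded_sa T" and eta: "\<eta> > 0"
    and gap: "\<And>s. 0 < \<bar>s - w\<bar> \<Longrightarrow> \<bar>s - w\<bar> < \<eta> \<Longrightarrow> bdd_inv (\<lambda>x. T x - s *\<^sub>R x)"
  defines "S \<equiv> \<lambda>x. T x - w *\<^sub>R x"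
  shows "\<eta> * norm (S y) \<le> norm (S (S y))"
proof -
  have Sb: "bounded_sa S" unfolding S_def by (rule bsa_shift[OF T])
  define R where "R = (\<lambda>x. S (S x))"
  have Rb: "bounded_sa R" unfolding R_def by (rule bsa_sq[OF Sb])
  have factor: "(\<lambda>x. R x - (a * a) *\<^sub>R x) = (\<lambda>x. (\<lambda>z. T z - (w + a) *\<^sub>R z) ((\<lambda>z. T z - (w - a) *\<^sub>R z) x))"
    for a unfolding R_def S_def
    by (rule ext) (simp add: bsa_diff[OF T] bsa_add[OF T] bsa_scaleR[OF T] algebra_simps)
  have invR: "bdd_inv (\<lambda>x. R x - s *\<^sub>R x)" if s: "0 < s" "s < \<eta>\<^sup>2" for s
  proof -
    have a: "0 < sqrt s" "sqrt s < \<eta>" using s eta real_sqrt_less_iff[of s "\<eta>\<^sup>2"] by auto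
    have "bdd_inv (\<lambda>x. R x - (sqrt s * sqrt s) *\<^sub>R x)"
      unfolding factor by (rule bdd_inv_comp; rule gap) (use a in auto)
    thus ?thesis using s by simp
  qed
  define c where "c = \<eta>\<^sup>2 / 2"
  have c: "0 < c" "c < \<eta>\<^sup>2" unfolding c_def using eta by auto
  have rb: "c * norm y \<le> norm (R y - c *\<^sub>R y)" for y
  proof (rule resolvent_bound[OF Rb invR[OF c] c(1)])
    fix s assume "\<bar>s - c\<bar> < c"
    hence "0 < s" "s < \<eta>\<^sup>2" unfolding c_def abs_less_iff by linarith+
    thus "\<not> approx_eig UNIV R s" using invR bdd_inv_not_approx_eig by blast
  qed
  have "(c * norm y)\<^sup>2 \<le> (norm (R y - c *\<^sub>R y))\<^sup>2" using rb[of y] c by (simp add: power_mono)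
  also have "\<dots> = (norm (R y))\<^sup>2 - 2 * Re (ip (R y) (c *\<^sub>R y)) + (norm (c *\<^sub>R y))\<^sup>2" by (rule norm_diff_sq)
  also have "Re (ip (R y) (c *\<^sub>R y)) = c * (norm (S y))\<^sup>2"
    unfolding R_def using bsa_sym[OF Sb, of "S y" y] by (simp add: ip_scaleR_right ip_self)
  finally have "2 * c * (norm (S y))\<^sup>2 \<le> (norm (S (S y)))\<^sup>2" unfolding R_def using c
    by (simp add: power_mult_distrib)
  hence "(\<eta> * norm (S y))\<^sup>2 \<le> (norm (S (S y)))\<^sup>2" unfolding c_def by (simp add: power_mult_distrib)
  thus ?thesis by (rule power2_le_imp_le) simp
qed

text \<open>Such vectors lie in the closure of the range of S = T - w, where the bound holds by the
  previous lemma.\<close>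
lemma isolated_bound:
  assumes T: "bounded_sa T" and eta: "\<eta> > 0"
    and gap: "\<And>s. 0 < \<bar>s - w\<bar> \<Longrightarrow> \<bar>s - w\<bar> < \<eta> \<Longrightarrow> bdd_inv (\<lambda>x. T x - s *\<^sub>R x)"
    and xo: "\<And>k. T k = w *\<^sub>R k \<Longrightarrow> ip x k = 0"
  shows "\<eta> * norm x \<le> norm (T x - w *\<^sub>R x)"
proof -
  define S where "S = (\<lambda>x. T x - w *\<^sub>R x)"
  have Sb: "bounded_sa S" unfolding S_def by (rule bsa_shift[OF T])
  have cont: "continuous_on UNIV S"
    using bounded_linear.continuous_on[OF bsa_bounded_linear[OF Sb] continuous_on_id] by simp
  have closed: "closed {y. \<eta> * norm y \<le> norm (S y)}"
    by (intro closed_Collect_le continuous_intros continuous_on_norm[OF cont])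
  have "range S \<subseteq> {y. \<eta> * norm y \<le> norm (S y)}"
    using punctured_gap_estimate[OF T eta gap] unfolding S_def by auto
  hence "closure (range S) \<subseteq> {y. \<eta> * norm y \<le> norm (S y)}" by (rule closure_minimal[OF _ closed])
  moreover have "x \<in> closure (range S)"
    by (rule orth_kernel_in_closure_range[OF Sb]) (use xo in \<open>simp add: S_def\<close>)
  ultimately show ?thesis unfolding S_def by blast
qed

section \<open>Nonnegativity off finitely many negative eigenvalues\<close>

lemma eigvec_orth:
  assumes "bounded_sa T" "T b = w *\<^sub>R b" "T b' = w' *\<^sub>R b'" "w \<noteq> w'"
  shows "ip b b' = 0"
proof -
  have "complex_of_real w * ip b b' = ip (T b) b'" using assms(2) by (simp add: ip_scaleR_left)
  also have "\<dots> = ip b (T b')" by (rule bsa_sym[OF assms(1)])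
  also have "\<dots> = complex_of_real w' * ip b b'" using assms(3) by (simp add: ip_scaleR_right)
  finally have "complex_of_real (w - w') * ip b b' = 0" by (simp add: algebra_simps)
  thus ?thesis using assms(4) by simp
qed

lemma eigenspace_csub: assumes "bounded_sa T" shows "csubspace sm {x. T x = w *\<^sub>R x}"
  unfolding csubspace_def using bsa_zero[OF assms] bsa_add[OF assms] bsa_sm[OF assms]
  by (auto simp: scaleR_add_right sm_scaleR_comm)

lemma orth_eigvecs_invariant:
  assumes T: "bounded_sa T" and eig: "\<forall>b\<in>Bs. \<exists>w. T b = w *\<^sub>R b" and y: "\<forall>b\<in>Bs. ip y b = 0"
  shows "\<forall>b\<in>Bs. ip (T y) b = 0"
proof
  fix b assume b: "b \<in> Bs"
  then obtain w where "T b = w *\<^sub>R b" using eig by blast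
  hence "ip (T y) b = complex_of_real w * ip y b" using bsa_sym[OF T, of y b] by (simp add: ip_scaleR_right)
  thus "ip (T y) b = 0" using y b by simp
qed

lemma joint_eigenbasis:
  assumes T: "bounded_sa T" and N: "finite N"
    and fd: "\<And>w. w \<in> N \<Longrightarrow> cfin_dim sm {x. T x = w *\<^sub>R x}"
  obtains Bs where "finite Bs" "orthonormal Bs" "\<forall>b\<in>Bs. \<exists>w\<in>N. T b = w *\<^sub>R b"
    "\<And>w k. w \<in> N \<Longrightarrow> T k = w *\<^sub>R k \<Longrightarrow> k \<in> cspan Bs"
proof -
  have "\<forall>w\<in>N. \<exists>B. finite B \<and> orthonormal B \<and> B \<subseteq> {x. T x = w *\<^sub>R x} \<and> {x. T x = w *\<^sub>R x} = cspan B"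
    using fin_dim_orthonormal_basis[OF eigenspace_csub[OF T] fd] by metis
  then obtain Bf where Bf: "\<And>w. w \<in> N \<Longrightarrow> finite (Bf w) \<and> orthonormal (Bf w) \<and>
      Bf w \<subseteq> {x. T x = w *\<^sub>R x} \<and> {x. T x = w *\<^sub>R x} = cspan (Bf w)"
    by metis
  define Bs where "Bs = (\<Union>w\<in>N. Bf w)"
  have fin: "finite Bs" unfolding Bs_def using N Bf by blast
  have eig: "T b = w *\<^sub>R b" if "w \<in> N" "b \<in> Bf w" for w b using Bf that by blast
  have "orthonormal Bs" unfolding orthonormal_def
  proof (intro conjI ballI impI)
    fix b assume "b \<in> Bs"
    thus "ip b b = 1" using Bf unfolding Bs_def orthonormal_def by blast
  next
    fix b b' assume bb: "b \<in> Bs" "b' \<in> Bs" "b \<noteq> b'"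
    then obtain w w' where w: "w \<in> N" "b \<in> Bf w" "w' \<in> N" "b' \<in> Bf w'" unfolding Bs_def by blast
    show "ip b b' = 0"
    proof (cases "w = w'")
      case True thus ?thesis using w bb(3) Bf unfolding orthonormal_def by blast
    next
      case False thus ?thesis using eigvec_orth[OF T eig[OF w(1,2)] eig[OF w(3,4)]] by blast
    qed
  qed
  moreover have "\<forall>b\<in>Bs. \<exists>w\<in>N. T b = w *\<^sub>R b" unfolding Bs_def using eig by blast
  moreover have "k \<in> cspan Bs" if "w \<in> N" "T k = w *\<^sub>R k" for w k
    using Bf[OF that(1)] that(2) cspan_mono[OF fin, of "Bf w"] that(1) unfolding Bs_def by blast
  ultimately show ?thesis using that fin by blast
qed

lemma punctured_nbhd_avoiding:
  fixes w :: real
  assumes "finite N" "w < 0"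
  obtains \<eta> where "\<eta> > 0" "\<And>s. 0 < \<bar>s - w\<bar> \<Longrightarrow> \<bar>s - w\<bar> < \<eta> \<Longrightarrow> s < 0 \<and> s \<notin> N"
proof -
  define D where "D = insert (- w) ((\<lambda>v. \<bar>v - w\<bar>) ` (N - {w}))"
  have D: "finite D" "\<forall>d\<in>D. d > 0" unfolding D_def using assms by auto
  define \<eta> where "\<eta> = Min D"
  have "\<eta> > 0" unfolding \<eta>_def using D D_def by simp
  moreover have "s < 0 \<and> s \<notin> N" if s: "0 < \<bar>s - w\<bar>" "\<bar>s - w\<bar> < \<eta>" for s
  proof
    have "\<eta> \<le> - w" unfolding \<eta>_def D_def using D D_def by simp
    thus "s < 0" using s by (simp add: abs_less_iff)
    show "s \<notin> N"
    proof
      assume "s \<in> N"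
      hence "\<eta> \<le> \<bar>s - w\<bar>" unfolding \<eta>_def using D s(1) unfolding D_def by (intro Min_le) auto
      thus False using s(2) by simp
    qed
  qed
  ultimately show ?thesis using that by blast
qed

lemma eigenvalue_not_approx_on_complement:
  assumes T: "bounded_sa T" and N: "finite N" and w0: "w < 0"
    and gap: "\<And>s. s < 0 \<Longrightarrow> s \<notin> N \<Longrightarrow> bdd_inv (\<lambda>x. T x - s *\<^sub>R x)"
    and span: "\<And>k. T k = w *\<^sub>R k \<Longrightarrow> k \<in> cspan Bs"
  shows "\<not> approx_eig {y. \<forall>b\<in>Bs. ip y b = 0} T w"
proof
  assume ap: "approx_eig {y. \<forall>b\<in>Bs. ip y b = 0} T w"
  obtain \<eta> where eta: "\<eta> > 0" "\<And>s. 0 < \<bar>s - w\<bar> \<Longrightarrow> \<bar>s - w\<bar> < \<eta> \<Longrightarrow> s < 0 \<and> s \<notin> N"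
    using punctured_nbhd_avoiding[OF N w0] by blast
  have bound: "\<eta> * norm y \<le> norm (T y - w *\<^sub>R y)" if "\<forall>b\<in>Bs. ip y b = 0" for y
    using isolated_bound[OF T eta(1) gap] eta(2) orth_cspan[OF that span] by blast
  obtain y where y: "\<forall>b\<in>Bs. ip y b = 0" "norm y = 1" "norm (T y - w *\<^sub>R y) < \<eta>"
    using ap eta(1) unfolding approx_eig_def by blast
  show False using bound[OF y(1)] y by simp
qed

text \<open>Let T be bounded self-adjoint such that T - w is invertible for every negative w outside
  a finite set N of negative reals, whose eigenspaces are finite-dimensional.  Then T is
  nonnegative on the orthogonal complement of a joint orthonormal eigenbasis Bs of these
  eigenspaces: otherwise the bottom of the quadratic form of T on that complement would be
  a negative approximate eigenvalue, which is excluded both off N (invertibility) and at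
  points of N (isolated_bound, since the complement is orthogonal to the eigenspace).\<close>
lemma nonneg_off_negative_eigenvectors:
  assumes T: "bounded_sa T" and N: "finite N" "\<forall>w\<in>N. w < 0"
    and gap: "\<And>w. w < 0 \<Longrightarrow> w \<notin> N \<Longrightarrow> bdd_inv (\<lambda>x. T x - w *\<^sub>R x)"
    and fd: "\<And>w. w \<in> N \<Longrightarrow> cfin_dim sm {x. T x = w *\<^sub>R x}"
  obtains Bs where "finite Bs" "orthonormal Bs" "\<forall>b\<in>Bs. \<exists>w\<in>N. T b = w *\<^sub>R b"
    "\<And>x. \<forall>b\<in>Bs. ip x b = 0 \<Longrightarrow> qform T x \<ge> 0"
proof -
  obtain Bs where Bs: "finite Bs" "orthonormal Bs" "\<forall>b\<in>Bs. \<exists>w\<in>N. T b = w *\<^sub>R b"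
    and span: "\<And>w k. w \<in> N \<Longrightarrow> T k = w *\<^sub>R k \<Longrightarrow> k \<in> cspan Bs"
    using joint_eigenbasis[OF T N(1) fd] by blast
  define U where "U = {y. \<forall>b\<in>Bs. ip y b = 0}"
  have Uc: "csubspace sm U" unfolding U_def by (rule csub_orth)
  have eigs: "\<forall>b\<in>Bs. \<exists>w. T b = w *\<^sub>R b" using Bs(3) by blast
  have TU: "- T y \<in> U" if "y \<in> U" for y
  proof -
    have "T y \<in> U" using orth_eigvecs_invariant[OF T eigs] that unfolding U_def by blast
    thus ?thesis by (rule csub_minus[OF Uc])
  qed
  have "qform T x \<ge> 0" if xU: "x \<in> U" for x
  proof (rule ccontr)
    assume neg: "\<not> qform T x \<ge> 0"
    have x0: "x \<noteq> 0" using neg unfolding qform_def by auto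
    note sup = sup_qform_approx_eig[OF bsa_neg[OF T] Uc TU xU x0]
    define w where "w = - Sup ((\<lambda>y. qform (\<lambda>y. - T y) y) ` {y\<in>U. norm y = 1})"
    have "- qform T x \<le> (- w) * (norm x)\<^sup>2" using sup(1)[of x] xU unfolding w_def qform_neg by simp
    hence w0: "w < 0" using neg x0 by (smt (verit) mult_nonpos_nonneg zero_le_power2)
    have ap: "approx_eig U T w" unfolding w_def by (rule approx_eig_neg[OF sup(2)])
    show False
    proof (cases "w \<in> N")
      case False
      thus False using bdd_inv_not_approx_eig[OF gap[OF w0 False]] ap by blast
    next
      case True
      thus False using eigenvalue_not_approx_on_complement[OF T N(1) w0 gap span[OF True]] ap
        unfolding U_def by blast
    qed
  qed
  thus ?thesis using that Bs unfolding U_def by blast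
qed

end

section \<open>A symmetric operator and its Galerkin approximations\<close>

text \<open>A linear operator A on a subspace D that is symmetric.\<close>
locale sym_operator = chilbert sm ip for sm :: "complex \<Rightarrow> 'a::banach \<Rightarrow> 'a" and ip +
  fixes D :: "'a set" and A :: "'a \<Rightarrow> 'a"
  assumes dom: "csubspace sm D" and lin: "clinear_on sm D A"
    and sym: "\<And>x y. x \<in> D \<Longrightarrow> y \<in> D \<Longrightarrow> ip (A x) y = ip x (A y)"
begin

lemma A_add: "x \<in> D \<Longrightarrow> y \<in> D \<Longrightarrow> A (x + y) = A x + A y"
  using lin unfolding clinear_on_def by blast
lemma A_sm: "x \<in> D \<Longrightarrow> A (sm a x) = sm a (A x)"
  using lin unfolding clinear_on_def by blast
lemma A_zero: "A 0 = 0"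
  using A_add[of 0 0] csub_zero[OF dom] by simp
lemma A_scaleR: "x \<in> D \<Longrightarrow> A (r *\<^sub>R x) = r *\<^sub>R A x"
  using A_sm[of x "complex_of_real r"] by (simp add: sm_real)
lemma A_diff: "x \<in> D \<Longrightarrow> y \<in> D \<Longrightarrow> A (x - y) = A x - A y"
  using A_add[of x "- y"] A_scaleR[of y "-1"] csub_minus[OF dom, of y] by simp
lemma A_sum: "(\<And>s. s \<in> S \<Longrightarrow> f s \<in> D) \<Longrightarrow> A (\<Sum>s\<in>S. f s) = (\<Sum>s\<in>S. A (f s))"
proof (induction S rule: infinite_finite_induct)
  case (insert x F)
  have "(\<Sum>s\<in>F. f s) \<in> D" using csub_sum[OF dom] insert.prems by blast
  thus ?case using insert A_add[of "f x" "sum f F"] by simp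
qed (simp_all add: A_zero)

lemma A_lin_comb:
  assumes "\<And>b. b \<in> Bs \<Longrightarrow> g b \<in> D"
  shows "A (\<Sum>b\<in>Bs. sm (a b) (g b)) = (\<Sum>b\<in>Bs. sm (a b) (A (g b)))"
proof -
  have "A (\<Sum>b\<in>Bs. sm (a b) (g b)) = (\<Sum>b\<in>Bs. A (sm (a b) (g b)))"
    by (rule A_sum) (use assms csub_sm[OF dom] in blast)
  also have "\<dots> = (\<Sum>b\<in>Bs. sm (a b) (A (g b)))" using assms A_sm by (intro sum.cong) auto
  finally show ?thesis .
qed

lemma shift_sym: "x \<in> D \<Longrightarrow> y \<in> D \<Longrightarrow> ip (A x - lam *\<^sub>R x) y = ip x (A y - lam *\<^sub>R y)"
  using sym by (simp add: ip_diff_left ip_diff_right ip_scaleR_left ip_scaleR_right)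

lemma compression_eigvec_orth:
  assumes V: "csubspace sm V" "cfin_dim sm V" and v: "v \<in> V"
    and eq: "orthproj ip V (A (orthproj ip V v)) = sm z v" and w: "w \<in> V"
  shows "ip (A v - sm z v) w = 0"
  using orthproj_fin_dim(2)[OF V, of "A v"] eq orthproj_self[OF V(1) v] w by simp

lemma common_approximants:
  assumes Bs: "finite Bs" "Bs \<subseteq> D" and mono: "\<And>n. V n \<subseteq> V (Suc n)"
    and dense: "\<And>x e. x \<in> D \<Longrightarrow> e > 0 \<Longrightarrow> \<exists>n. \<exists>v\<in>V n. norm (x - v) + norm (A x - A v) < e"
    and e: "e > 0"
  obtains N0 where "\<And>n. n \<ge> N0 \<Longrightarrow> \<exists>u. \<forall>b\<in>Bs. u b \<in> V n \<and> norm (b - u b) + norm (A b - A (u b)) < e"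
proof -
  have "\<forall>b\<in>Bs. \<exists>i u. u \<in> V i \<and> norm (b - u) + norm (A b - A u) < e" using dense e Bs(2) by blast
  then obtain nb u where u: "\<And>b. b \<in> Bs \<Longrightarrow> u b \<in> V (nb b) \<and> norm (b - u b) + norm (A b - A (u b)) < e"
    by metis
  define N0 where "N0 = Max (insert 0 (nb ` Bs))"
  have "u b \<in> V n" if "b \<in> Bs" "n \<ge> N0" for b n
  proof -
    have "nb b \<le> n" using Bs(1) that unfolding N0_def by (meson Max_ge finite_imageI finite_insert imageI insertCI order_trans)
    thus ?thesis using lift_Suc_mono_le[of V, OF mono] u[OF that(1)] by blast
  qed
  thus ?thesis using that u by blast
qed

lemma norm_lin_comb_le:
  assumes "\<And>b. b \<in> Bs \<Longrightarrow> cmod (a b) \<le> K" "\<And>b. b \<in> Bs \<Longrightarrow> norm (g b) \<le> \<epsilon>"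
  shows "norm (\<Sum>b\<in>Bs. sm (a b) (g b)) \<le> real (card Bs) * K * \<epsilon>"
proof -
  have "norm (\<Sum>b\<in>Bs. sm (a b) (g b)) \<le> (\<Sum>b\<in>Bs. norm (sm (a b) (g b)))" by (rule norm_sum)
  also have "\<dots> \<le> (\<Sum>b\<in>Bs. K * \<epsilon>)"
    using assms by (intro sum_mono) (simp add: norm_sm mult_mono' )
  finally show ?thesis by simp
qed

end

section \<open>The variational contradiction\<close>

context sym_operator
begin

lemma shift_eigen_comb:
  assumes Bs: "Bs \<subseteq> D" and eig: "\<And>b. b \<in> Bs \<Longrightarrow> A b - lam *\<^sub>R b = c b *\<^sub>R b"
  shows "A (\<Sum>b\<in>Bs. sm (a b) b) - lam *\<^sub>R (\<Sum>b\<in>Bs. sm (a b) b) = (\<Sum>b\<in>Bs. sm (a b * c b) b)"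
proof -
  have "A (\<Sum>b\<in>Bs. sm (a b) b) - lam *\<^sub>R (\<Sum>b\<in>Bs. sm (a b) b) = (\<Sum>b\<in>Bs. sm (a b) (A b - lam *\<^sub>R b))"
    using A_lin_comb[of Bs id a] Bs by (auto simp: scaleR_sum_right sm_scaleR_comm sm_diff_right sum_subtractf)
  also have "\<dots> = (\<Sum>b\<in>Bs. sm (a b * c b) b)"
    using eig by (intro sum.cong) (simp_all add: sm_mult sm_real)
  finally show ?thesis .
qed

lemma qform_eigen_comb:
  assumes Bs: "finite Bs" "orthonormal Bs" "Bs \<subseteq> D"
    and eig: "\<And>b. b \<in> Bs \<Longrightarrow> A b - lam *\<^sub>R b = c b *\<^sub>R b" and neg: "\<And>b. b \<in> Bs \<Longrightarrow> \<sigma> * c b \<le> - \<kappa>"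
    and e: "e = (\<Sum>b\<in>Bs. sm (a b) b)"
  shows "\<sigma> * Re (ip (A e - lam *\<^sub>R e) e) \<le> - \<kappa> * (norm e)\<^sup>2"
proof -
  have "A e - lam *\<^sub>R e = (\<Sum>b\<in>Bs. sm (a b * c b) b)"
    unfolding e by (rule shift_eigen_comb[OF Bs(3) eig])
  hence "ip (A e - lam *\<^sub>R e) e = (\<Sum>b\<in>Bs. a b * c b * cnj (a b))"
    unfolding e using ip_orthonormal_sums[OF Bs(2,1)] by simp
  also have "\<dots> = complex_of_real (\<Sum>b\<in>Bs. c b * (cmod (a b))\<^sup>2)"
    unfolding of_real_sum
  proof (intro sum.cong refl)
    fix b
    have "a b * cnj (a b) = complex_of_real ((cmod (a b))\<^sup>2)" by (simp only: complex_norm_square)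
    thus "a b * c b * cnj (a b) = complex_of_real (c b * (cmod (a b))\<^sup>2)"
      by (simp only: of_real_mult) (simp add: algebra_simps)
  qed
  finally have "\<sigma> * Re (ip (A e - lam *\<^sub>R e) e) = (\<Sum>b\<in>Bs. (\<sigma> * c b) * (cmod (a b))\<^sup>2)"
    by (simp add: sum_distrib_left mult.assoc)
  also have "\<dots> \<le> (\<Sum>b\<in>Bs. (- \<kappa>) * (cmod (a b))\<^sup>2)"
    using neg by (intro sum_mono mult_right_mono) auto
  also have "\<dots> = - \<kappa> * (norm e)\<^sup>2"
    unfolding e norm_orthonormal_sum[OF Bs(2,1)] by (simp add: sum_distrib_left)
  finally show ?thesis .
qed

lemma norm_onb_proj_le: assumes "orthonormal Bs" "finite Bs" shows "norm (onb_proj Bs v) \<le> norm v"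
proof -
  have "ip (onb_proj Bs v) (v - onb_proj Bs v) = 0"
    using onb_proj_orth_span[OF assms onb_proj_in, of v v]
      ip_conj[of "v - onb_proj Bs v" "onb_proj Bs v"] by simp
  hence "(norm v)\<^sup>2 = (norm (onb_proj Bs v))\<^sup>2 + (norm (v - onb_proj Bs v))\<^sup>2"
    using norm_add_sq[of "onb_proj Bs v" "v - onb_proj Bs v"] by simp
  thus ?thesis by (simp add: power2_le_imp_le)
qed

text \<open>Writing v = e + f with e the
  projection of v onto span Bs, the form s<(A - lam) v, v - 2e> = s<(A-lam) f, f> -
  s<(A-lam) e, e> is then bounded below by min k k' * (norm v)^2.\<close>
lemma indefinite_coercivity:
  assumes Bs: "finite Bs" "orthonormal Bs" "Bs \<subseteq> D"
    and eig: "\<And>b. b \<in> Bs \<Longrightarrow> A b - lam *\<^sub>R b = c b *\<^sub>R b" and neg: "\<And>b. b \<in> Bs \<Longrightarrow> \<sigma> * c b \<le> - \<kappa>"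
    and pos: "\<And>f. f \<in> D \<Longrightarrow> \<forall>b\<in>Bs. ip f b = 0 \<Longrightarrow> \<kappa>' * (norm f)\<^sup>2 \<le> \<sigma> * Re (ip (A f - lam *\<^sub>R f) f)"
    and v: "v \<in> D"
  defines "e \<equiv> onb_proj Bs v"
  shows "min \<kappa> \<kappa>' * (norm v)\<^sup>2 \<le> \<sigma> * Re (ip (A v - lam *\<^sub>R v) (v - 2 *\<^sub>R e))"
proof -
  define f where "f = v - e"
  define B0 where "B0 x = A x - lam *\<^sub>R x" for x
  have eD: "e \<in> D" unfolding e_def onb_proj_def
    by (rule csub_sum[OF dom]) (use csub_sm[OF dom] Bs(3) in blast)
  have fD: "f \<in> D" unfolding f_def using csub_diff[OF dom v eD] .
  have fo: "\<forall>b\<in>Bs. ip f b = 0" unfolding f_def e_def using onb_proj_orth[OF Bs(2,1)] by blast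
  have "B0 e = (\<Sum>b\<in>Bs. sm (ip v b * c b) b)"
    using shift_eigen_comb[OF Bs(3) eig, of "\<lambda>b. ip v b"] unfolding B0_def e_def onb_proj_def by simp
  hence "B0 e \<in> cspan Bs" by (simp add: lin_comb_in_cspan)
  hence c1: "ip (B0 e) f = 0" and c2: "ip (B0 f) e = 0"
    using orth_cspan[OF fo] ip_conj[of f "B0 e"] shift_sym[OF fD eD, of lam] unfolding B0_def by auto
  have "ip e f = 0" using orth_cspan[OF fo, of e] onb_proj_in ip_conj[of f e] unfolding e_def by simp
  hence nv: "(norm v)\<^sup>2 = (norm e)\<^sup>2 + (norm f)\<^sup>2" using norm_add_sq[of e f] unfolding f_def by simp
  have qe: "\<sigma> * Re (ip (B0 e) e) \<le> - \<kappa> * (norm e)\<^sup>2"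
    unfolding B0_def by (rule qform_eigen_comb[OF Bs eig neg, where a="\<lambda>b. ip v b"]) (simp_all add: e_def onb_proj_def)
  have qf: "\<kappa>' * (norm f)\<^sup>2 \<le> \<sigma> * Re (ip (B0 f) f)" unfolding B0_def by (rule pos[OF fD fo])
  have "B0 v = B0 e + B0 f" unfolding B0_def f_def using A_add[OF eD fD] by (simp add: f_def algebra_simps)
  moreover have "v - 2 *\<^sub>R e = f - e" unfolding f_def by (simp add: scaleR_2)
  ultimately have X: "ip (B0 v) (v - 2 *\<^sub>R e) = ip (B0 f) f - ip (B0 e) e"
    using c1 c2 by (simp add: ip_add_left ip_diff_right)
  have "min \<kappa> \<kappa>' * (norm v)\<^sup>2 \<le> \<kappa> * (norm e)\<^sup>2 + \<kappa>' * (norm f)\<^sup>2"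
    unfolding nv by (simp add: distrib_left add_mono mult_right_mono)
  also have "\<dots> \<le> \<sigma> * Re (ip (B0 v) (v - 2 *\<^sub>R e))" unfolding X using qe qf by (simp add: algebra_simps)
  finally show ?thesis unfolding B0_def .
qed

lemma galerkin_defect_bound:
  assumes D: "v \<in> D" "e \<in> D" "e' \<in> D"
    and orth: "ip (A v - sm z v) (v - 2 *\<^sub>R e') = 0" and z: "cmod (z - complex_of_real lam) \<le> \<epsilon>"
    and e: "norm e \<le> norm v" and close: "norm (e - e') \<le> \<delta>" "norm (A e - A e') \<le> \<delta>"
  shows "cmod (ip (A v - lam *\<^sub>R v) (v - 2 *\<^sub>R e))
    \<le> \<epsilon> * norm v * (3 * norm v + 2 * \<delta>) + 2 * norm v * (\<delta> * (1 + \<bar>lam\<bar>))"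
proof -
  define B0 where "B0 x = A x - lam *\<^sub>R x" for x
  define w where "w = v - 2 *\<^sub>R e'"
  have "A v - sm z v = B0 v - sm (z - complex_of_real lam) v" unfolding B0_def by (simp add: sm_diff_left sm_real)
  hence Bw: "ip (B0 v) w = (z - complex_of_real lam) * ip v w"
    using orth unfolding w_def by (simp add: ip_diff_left ip_sm_left)
  have "ip (B0 v) (e - e') = ip v (B0 e - B0 e')"
    using shift_sym[OF D(1) csub_diff[OF dom D(2,3)]] A_diff[OF D(2,3)] unfolding B0_def
    by (simp add: algebra_simps)
  moreover have "v - 2 *\<^sub>R e = w - 2 *\<^sub>R (e - e')" unfolding w_def by (simp add: algebra_simps)
  ultimately have X: "ip (B0 v) (v - 2 *\<^sub>R e) = (z - complex_of_real lam) * ip v w - 2 * ip v (B0 e - B0 e')"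
    using Bw by (simp add: ip_diff_right ip_scaleR_right)
  have "norm w \<le> norm v + 2 * (norm e + \<delta>)"
    using norm_triangle_ineq4[of v "2 *\<^sub>R e'"] norm_triangle_ineq4[of e "e - e'"] close(1) unfolding w_def by simp
  hence nw: "norm w \<le> 3 * norm v + 2 * \<delta>" using e by simp
  have "B0 e - B0 e' = (A e - A e') - lam *\<^sub>R (e - e')" unfolding B0_def by (simp add: algebra_simps)
  hence "norm (B0 e - B0 e') \<le> \<delta> + \<bar>lam\<bar> * \<delta>"
    using norm_triangle_ineq4[of "A e - A e'" "lam *\<^sub>R (e - e')"] close
    by (smt (verit, best) abs_ge_zero mult_left_mono norm_scaleR)
  hence nB: "norm (B0 e - B0 e') \<le> \<delta> * (1 + \<bar>lam\<bar>)" by (simp add: algebra_simps)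
  have "cmod (ip (B0 v) (v - 2 *\<^sub>R e)) \<le> cmod (z - complex_of_real lam) * cmod (ip v w) + 2 * cmod (ip v (B0 e - B0 e'))"
    unfolding X using norm_triangle_ineq4 by (metis norm_mult norm_numeral)
  also have "\<dots> \<le> \<epsilon> * (norm v * (3 * norm v + 2 * \<delta>)) + 2 * (norm v * (\<delta> * (1 + \<bar>lam\<bar>)))"
    using z order_trans[OF norm_ge_zero z] cauchy_schwarz[of v w] cauchy_schwarz[of v "B0 e - B0 e'"] nw nB
    by (intro add_mono mult_mono mult_left_mono order_trans[OF cauchy_schwarz]) auto
  finally show ?thesis unfolding B0_def by (simp add: algebra_simps)
qed

lemma graph_approx_projection:
  fixes v :: 'a
  assumes Bs: "finite Bs" "orthonormal Bs" "Bs \<subseteq> D"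
    and u: "\<And>b. b \<in> Bs \<Longrightarrow> u b \<in> D \<and> norm (b - u b) + norm (A b - A (u b)) < \<epsilon>"
  defines "e' \<equiv> (\<Sum>b\<in>Bs. sm (ip v b) (u b))"
  shows "norm (onb_proj Bs v - e') \<le> real (card Bs) * norm v * \<epsilon>"
    and "norm (A (onb_proj Bs v) - A e') \<le> real (card Bs) * norm v * \<epsilon>"
proof -
  have coef: "cmod (ip v b) \<le> norm v" if "b \<in> Bs" for b
    using cauchy_schwarz[of v b] norm_orthonormal[OF Bs(2) that] by simp
  have small: "norm (b - u b) \<le> \<epsilon>" "norm (A b - A (u b)) \<le> \<epsilon>" if "b \<in> Bs" for b
    using u[OF that] norm_ge_zero[of "b - u b"] norm_ge_zero[of "A b - A (u b)"] by linarith+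
  have "onb_proj Bs v - e' = (\<Sum>b\<in>Bs. sm (ip v b) (b - u b))"
    unfolding e'_def onb_proj_def by (simp add: sm_diff_right sum_subtractf)
  thus "norm (onb_proj Bs v - e') \<le> real (card Bs) * norm v * \<epsilon>"
    using norm_lin_comb_le[OF coef small(1)] by simp
  have "A (onb_proj Bs v) - A e' = (\<Sum>b\<in>Bs. sm (ip v b) (A b - A (u b)))"
    using A_lin_comb[of Bs id] A_lin_comb[of Bs u] u Bs(3) unfolding e'_def onb_proj_def
    by (auto simp: sm_diff_right sum_subtractf)
  thus "norm (A (onb_proj Bs v) - A e') \<le> real (card Bs) * norm v * \<epsilon>"
    using norm_lin_comb_le[OF coef small(2)] by simp
qed

text \<open>If v is
  an eigenvector of the compression of A to V with eigenvalue z eps-close to lam, then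
  indefinite coercivity (applied to v) and the defect bound (with the test vector
  v - 2e', e' the approximation of the projection e of v) give
  min k k' (norm v)^2 \<le> (norm v)^2 * eps * (3 + 2 m eps + 2 m (1 + |lam|)), m = card Bs.\<close>
lemma galerkin_eigvec_bound:
  fixes lam \<epsilon> :: real
  assumes sig: "\<bar>\<sigma>\<bar> = 1"
    and Bs: "finite Bs" "orthonormal Bs" "Bs \<subseteq> D"
    and eig: "\<And>b. b \<in> Bs \<Longrightarrow> A b - lam *\<^sub>R b = c b *\<^sub>R b"
    and neg: "\<And>b. b \<in> Bs \<Longrightarrow> \<sigma> * c b \<le> - \<kappa>"
    and pos: "\<And>f. f \<in> D \<Longrightarrow> \<forall>b\<in>Bs. ip f b = 0 \<Longrightarrow>
        \<kappa>' * (norm f)\<^sup>2 \<le> \<sigma> * Re (ip (A f - lam *\<^sub>R f) f)"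
    and V: "csubspace sm V" "cfin_dim sm V" "V \<subseteq> D"
    and u: "\<And>b. b \<in> Bs \<Longrightarrow> u b \<in> V \<and> norm (b - u b) + norm (A b - A (u b)) < \<epsilon>"
    and v: "v \<in> V" "orthproj ip V (A (orthproj ip V v)) = sm z v"
    and z: "cmod (z - complex_of_real lam) < \<epsilon>"
  shows "min \<kappa> \<kappa>' * (norm v)\<^sup>2
    \<le> (norm v)\<^sup>2 * (\<epsilon> * (3 + 2 * real (card Bs) * \<epsilon> + 2 * real (card Bs) * (1 + \<bar>lam\<bar>)))"
proof -
  define e where "e = onb_proj Bs v"
  define e' where "e' = (\<Sum>b\<in>Bs. sm (ip v b) (u b))"
  define \<delta> where "\<delta> = real (card Bs) * norm v * \<epsilon>"
  have vD: "v \<in> D" using v(1) V(3) by blast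
  have eD: "e \<in> D" unfolding e_def onb_proj_def
    by (rule csub_sum[OF dom]) (use csub_sm[OF dom] Bs(3) in blast)
  have e'V: "e' \<in> V" unfolding e'_def by (rule csub_sum[OF V(1)]) (use csub_sm[OF V(1)] u in blast)
  have uD: "u b \<in> D \<and> norm (b - u b) + norm (A b - A (u b)) < \<epsilon>" if "b \<in> Bs" for b
    using u[OF that] V(3) by blast
  note close = graph_approx_projection[OF Bs uD, of v, folded e'_def e_def \<delta>_def]
  have "v - 2 *\<^sub>R e' \<in> V" using csub_diff[OF V(1) v(1) csub_scaleR[OF V(1) e'V]] .
  hence orth: "ip (A v - sm z v) (v - 2 *\<^sub>R e') = 0" by (rule compression_eigvec_orth[OF V(1,2) v])
  let ?X = "ip (A v - lam *\<^sub>R v) (v - 2 *\<^sub>R e)"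
  have "min \<kappa> \<kappa>' * (norm v)\<^sup>2 \<le> \<sigma> * Re ?X"
    unfolding e_def by (rule indefinite_coercivity[OF Bs eig neg pos vD])
  also have "\<dots> \<le> \<bar>Re ?X\<bar>" using sig by (metis abs_ge_self abs_mult mult_1)
  also have "\<dots> \<le> cmod ?X" by (rule abs_Re_le_cmod)
  also have "\<dots> \<le> \<epsilon> * norm v * (3 * norm v + 2 * \<delta>) + 2 * norm v * (\<delta> * (1 + \<bar>lam\<bar>))"
    using galerkin_defect_bound[OF vD eD V(3)[THEN subsetD, OF e'V] orth less_imp_le[OF z] _ close]
      norm_onb_proj_le[OF Bs(2,1)] unfolding e_def by blast
  also have "\<dots> = (norm v)\<^sup>2 * (\<epsilon> * (3 + 2 * real (card Bs) * \<epsilon> + 2 * real (card Bs) * (1 + \<bar>lam\<bar>)))"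
    unfolding \<delta>_def by (simp add: power2_eq_square algebra_simps)
  finally show ?thesis .
qed

text \<open>Choose eps so small that eps * (3 + 2 m + 2 m (1 + |lam|)) < min k k' and pick n large
  enough that V n contains the eps-approximations and a Galerkin eigenvalue eps-close to lam.\<close>
lemma galerkin_contradiction:
  assumes sig: "\<bar>\<sigma>\<bar> = 1"
    and Bs: "finite Bs" "orthonormal Bs" "Bs \<subseteq> D"
    and eig: "\<And>b. b \<in> Bs \<Longrightarrow> A b - lam *\<^sub>R b = c b *\<^sub>R b"
    and neg: "\<kappa> > 0" "\<And>b. b \<in> Bs \<Longrightarrow> \<sigma> * c b \<le> - \<kappa>"
    and pos: "\<kappa>' > 0" "\<And>f. f \<in> D \<Longrightarrow> \<forall>b\<in>Bs. ip f b = 0 \<Longrightarrow>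
        \<kappa>' * (norm f)\<^sup>2 \<le> \<sigma> * Re (ip (A f - lam *\<^sub>R f) f)"
    and V: "\<And>n. csubspace sm (V n) \<and> cfin_dim sm (V n) \<and> V n \<subseteq> D \<and> V n \<subseteq> V (Suc n)"
    and dense: "\<And>x e. x \<in> D \<Longrightarrow> e > 0 \<Longrightarrow> \<exists>n. \<exists>v\<in>V n. norm (x - v) + norm (A x - A v) < e"
    and spu: "\<And>e. e > 0 \<Longrightarrow> \<forall>\<^sub>F n in sequentially.
        \<exists>z\<in>compr_spectrum sm ip (V n) A. cmod (z - complex_of_real lam) < e"
  shows False
proof -
  define \<kappa>0 where "\<kappa>0 = min \<kappa> \<kappa>'"
  define m where "m = real (card Bs)"
  define K where "K = 3 + 2 * m + 2 * m * (1 + \<bar>lam\<bar>)"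
  define \<epsilon> where "\<epsilon> = min 1 (\<kappa>0 / (2 * K))"
  have k0: "\<kappa>0 > 0" unfolding \<kappa>0_def using neg(1) pos(1) by simp
  have m0: "m \<ge> 0" unfolding m_def by simp
  have K0: "K > 0" unfolding K_def using m0 by (simp add: add_pos_nonneg)
  have ep: "0 < \<epsilon>" "\<epsilon> \<le> 1" unfolding \<epsilon>_def using k0 K0 by auto
  have epK: "\<epsilon> * K < \<kappa>0"
  proof -
    have "\<epsilon> * K \<le> (\<kappa>0 / (2 * K)) * K" unfolding \<epsilon>_def using K0 by (intro mult_right_mono) auto
    thus ?thesis using K0 k0 by simp
  qed
  obtain N0 where N0: "\<And>n. n \<ge> N0 \<Longrightarrow> \<exists>u. \<forall>b\<in>Bs. u b \<in> V n \<and> norm (b - u b) + norm (A b - A (u b)) < \<epsilon>"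
    using common_approximants[OF Bs(1,3) _ dense ep(1)] V by blast
  obtain N where N: "\<And>n. n \<ge> N \<Longrightarrow> \<exists>z\<in>compr_spectrum sm ip (V n) A. cmod (z - complex_of_real lam) < \<epsilon>"
    using spu[OF ep(1)] unfolding eventually_sequentially by blast
  define n where "n = max N N0"
  obtain z v where z: "cmod (z - complex_of_real lam) < \<epsilon>"
    and v: "v \<in> V n" "v \<noteq> 0" "orthproj ip (V n) (A (orthproj ip (V n) v)) = sm z v"
    using N[of n] unfolding n_def compr_spectrum_def by auto
  obtain u where u: "\<And>b. b \<in> Bs \<Longrightarrow> u b \<in> V n \<and> norm (b - u b) + norm (A b - A (u b)) < \<epsilon>"
    using N0[of n] unfolding n_def by auto
  have "\<kappa>0 * (norm v)\<^sup>2 \<le> (norm v)\<^sup>2 * (\<epsilon> * (3 + 2 * m * \<epsilon> + 2 * m * (1 + \<bar>lam\<bar>)))"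
    unfolding \<kappa>0_def m_def using V by (intro galerkin_eigvec_bound[OF sig Bs eig neg(2) pos(2) _ _ _ u v(1,3) z]) auto
  also have "\<dots> \<le> (norm v)\<^sup>2 * (\<epsilon> * K)"
    unfolding K_def using ep m0 by (intro mult_left_mono) (auto simp: mult_left_le)
  finally have "\<kappa>0 \<le> \<epsilon> * K" using v(2) by simp
  thus False using epK by simp
qed

end

section \<open>The resolvent of A at a point outside the spectrum\<close>

context sym_operator
begin

lemma not_in_spectrum:
  assumes "complex_of_real r \<notin> op_spectrum sm D A"
  shows "bij_betw (\<lambda>x. A x - r *\<^sub>R x) D UNIV"
    and "\<exists>C>0. \<forall>x\<in>D. norm x \<le> C * norm (A x - r *\<^sub>R x)"
proof -
  have h: "bij_betw (\<lambda>x. A x - r *\<^sub>R x) D UNIV \<and> (\<exists>C. \<forall>x\<in>D. norm x \<le> C * norm (A x - r *\<^sub>R x))"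
    using assms unfolding op_spectrum_def by (simp add: sm_real)
  thus "bij_betw (\<lambda>x. A x - r *\<^sub>R x) D UNIV" by blast
  obtain C where "\<forall>x\<in>D. norm x \<le> C * norm (A x - r *\<^sub>R x)" using h by blast
  hence "\<forall>x\<in>D. norm x \<le> max C 1 * norm (A x - r *\<^sub>R x)"
    by (meson max.cobounded1 mult_right_mono norm_ge_zero order_trans)
  thus "\<exists>C>0. \<forall>x\<in>D. norm x \<le> C * norm (A x - r *\<^sub>R x)" by (intro exI[of _ "max C 1"]) auto
qed

text \<open>The resolvent R(r) = (A - r)^-1, meaningful for r outside the spectrum.\<close>
definition resolvent :: "real \<Rightarrow> 'a \<Rightarrow> 'a" where
  "resolvent r = inv_into D (\<lambda>x. A x - r *\<^sub>R x)"

lemma resolvent_props: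
  assumes ns: "complex_of_real r \<notin> op_spectrum sm D A"
  shows "resolvent r y \<in> D" "A (resolvent r y) - r *\<^sub>R resolvent r y = y"
    "x \<in> D \<Longrightarrow> resolvent r (A x - r *\<^sub>R x) = x" "bounded_sa (resolvent r)"
proof -
  have bij: "bij_betw (\<lambda>x. A x - r *\<^sub>R x) D UNIV" using not_in_spectrum(1)[OF ns] .
  obtain C where C: "\<forall>x\<in>D. norm x \<le> C * norm (A x - r *\<^sub>R x)" using not_in_spectrum(2)[OF ns] by blast
  define f where "f = (\<lambda>x. A x - r *\<^sub>R x)"
  define g where "g = resolvent r"
  show gD: "resolvent r y \<in> D" for y unfolding resolvent_def
    using bij by (metis bij_betw_def inv_into_into UNIV_I)
  show fg: "A (resolvent r y) - r *\<^sub>R resolvent r y = y" for y unfolding resolvent_def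
    using bij_betw_inv_into_right[OF bij] by simp
  show gf: "x \<in> D \<Longrightarrow> resolvent r (A x - r *\<^sub>R x) = x" for x unfolding resolvent_def
    using bij_betw_inv_into_left[OF bij] by simp
  have fadd: "f (u + v) = f u + f v" if "u \<in> D" "v \<in> D" for u v
    unfolding f_def using A_add[OF that] by (simp add: algebra_simps)
  have fsm: "f (sm a u) = sm a (f u)" if "u \<in> D" for a u
    unfolding f_def using A_sm[OF that] by (simp add: sm_diff_right sm_scaleR_comm)
  have gD: "g y \<in> D" for y unfolding g_def by (rule gD)
  have fg: "f (g y) = y" for y unfolding f_def g_def by (rule fg)
  have gf: "x \<in> D \<Longrightarrow> g (f x) = x" for x unfolding f_def g_def by (rule gf)
  show "bounded_sa (resolvent r)" unfolding g_def[symmetric] bounded_sa_def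
  proof (intro conjI allI exI)
    fix x y show "g (x + y) = g x + g y" using gf[OF csub_add[OF dom gD gD]] fadd[OF gD gD] fg by simp
  next
    fix a x show "g (sm a x) = sm a (g x)" using gf[OF csub_sm[OF dom gD]] fsm[OF gD] fg by simp
  next
    fix x show "norm (g x) \<le> C * norm x" using C gD fg unfolding f_def by metis
  next
    fix x y show "ip (g x) y = ip x (g y)"
      using shift_sym[OF gD gD, where lam = r] fg unfolding f_def by simp
  qed
qed

text \<open>Resolvent identity in operator form: if also lam + 1/mu is outside the spectrum, then
  R(lam) - mu is bounded below (by the bound for A - (lam + 1/mu)) and surjective, i.e.
  invertible with bounded inverse.\<close>
lemma resolvent_shift_bdd_inv:
  assumes ns: "complex_of_real lam \<notin> op_spectrum sm D A" and mu: "\<mu> \<noteq> 0"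
    and ns2: "complex_of_real (lam + 1 / \<mu>) \<notin> op_spectrum sm D A"
  shows "bdd_inv (\<lambda>x. resolvent lam x - \<mu> *\<^sub>R x)"
proof -
  define s where "s = lam + 1 / \<mu>"
  define T where "T = resolvent lam"
  note T = resolvent_props[OF ns, folded T_def]
  obtain Cs where Cs: "Cs > 0" "\<forall>x\<in>D. norm x \<le> Cs * norm (A x - s *\<^sub>R x)"
    using not_in_spectrum(2)[OF ns2] unfolding s_def by blast
  define m where "m = \<bar>\<mu>\<bar>"
  have m0: "m > 0" unfolding m_def using mu by simp
  have below: "norm x \<le> ((Cs / m + 1) / m) * norm (T x - \<mu> *\<^sub>R x)" for x
  proof -
    have "A (T x) - s *\<^sub>R T x = - ((1 / \<mu>) *\<^sub>R (T x - \<mu> *\<^sub>R x))"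
      using T(2)[of x] mu unfolding s_def by (simp add: algebra_simps)
    hence "norm (A (T x) - s *\<^sub>R T x) = norm (T x - \<mu> *\<^sub>R x) / m" unfolding m_def
      by (simp add: divide_inverse mult.commute)
    hence nT: "norm (T x) \<le> Cs * (norm (T x - \<mu> *\<^sub>R x) / m)" using Cs(2) T(1)[of x] by metis
    have "m * norm x \<le> norm (T x) + norm (T x - \<mu> *\<^sub>R x)" unfolding m_def
      using norm_triangle_ineq4[of "T x" "T x - \<mu> *\<^sub>R x"] by simp
    also have "\<dots> \<le> (Cs / m + 1) * norm (T x - \<mu> *\<^sub>R x)" using nT by (simp add: algebra_simps)
    finally show ?thesis using m0 by (simp add: field_simps)
  qed
  have inj: "inj (\<lambda>x. T x - \<mu> *\<^sub>R x)"
  proof (rule injI)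
    fix x y assume "T x - \<mu> *\<^sub>R x = T y - \<mu> *\<^sub>R y"
    hence "T (x - y) - \<mu> *\<^sub>R (x - y) = 0" by (simp add: bsa_diff[OF T(4)] algebra_simps)
    thus "x = y" using below[of "x - y"] by simp
  qed
  have surj: "surj (\<lambda>x. T x - \<mu> *\<^sub>R x)"
  proof (rule surjI)
    fix y
    define u where "u = resolvent s (- ((1 / \<mu>) *\<^sub>R y))"
    note Ts = resolvent_props[OF ns2[folded s_def]]
    define x where "x = A u - lam *\<^sub>R u"
    have "T x = u" unfolding T_def x_def u_def using resolvent_props(3)[OF ns Ts(1)] .
    moreover have "x = - ((1 / \<mu>) *\<^sub>R y) + (1 / \<mu>) *\<^sub>R u"
      using Ts(2)[of "- ((1 / \<mu>) *\<^sub>R y)"] unfolding x_def u_def s_def by (simp add: algebra_simps)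
    hence "\<mu> *\<^sub>R x = - y + u" using mu by (simp add: scaleR_add_right scaleR_diff_right)
    ultimately show "T x - \<mu> *\<^sub>R x = y" by simp
  qed
  show ?thesis unfolding bdd_inv_def T_def[symmetric] using inj surj below by (metis bij_def)
qed

lemma resolvent_eigvec:
  assumes ns: "complex_of_real lam \<notin> op_spectrum sm D A" and w: "w \<noteq> 0"
  shows "resolvent lam x = w *\<^sub>R x \<longleftrightarrow> x \<in> D \<and> A x = (lam + 1 / w) *\<^sub>R x"
proof
  assume Tx: "resolvent lam x = w *\<^sub>R x"
  have "x = (1 / w) *\<^sub>R resolvent lam x" using Tx w by simp
  hence xD: "x \<in> D" using csub_scaleR[OF dom resolvent_props(1)[OF ns]] by metis
  have "A (w *\<^sub>R x) - lam *\<^sub>R (w *\<^sub>R x) = x" using resolvent_props(2)[OF ns, of x] unfolding Tx .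
  hence "w *\<^sub>R (A x - lam *\<^sub>R x) = x" using A_scaleR[OF xD] by (simp add: algebra_simps)
  hence "(1 / w) *\<^sub>R (w *\<^sub>R (A x - lam *\<^sub>R x)) = (1 / w) *\<^sub>R x" by simp
  hence "A x - lam *\<^sub>R x = (1 / w) *\<^sub>R x" using w by simp
  thus "x \<in> D \<and> A x = (lam + 1 / w) *\<^sub>R x" using xD by (simp add: algebra_simps)
next
  assume a: "x \<in> D \<and> A x = (lam + 1 / w) *\<^sub>R x"
  hence "A (w *\<^sub>R x) - lam *\<^sub>R (w *\<^sub>R x) = x"
    using A_scaleR[of x w] w by (simp add: algebra_simps)
  thus "resolvent lam x = w *\<^sub>R x"
    using resolvent_props(3)[OF ns csub_scaleR[OF dom, of x w]] a by simp
qed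

end

section \<open>Excluding one side of the spectrum\<close>

text \<open>Throughout, s = +-1 selects a side of lam: the spectral points r with s (r - lam) < 0.
  On that side, the signed resolvent s R(lam) has eigenvalue w exactly where A has
  eigenvalue lam + s/w, which lies on the chosen side iff w < 0.\<close>

context sym_operator
begin

lemma signed_resolvent_eigvec:
  assumes ns: "complex_of_real lam \<notin> op_spectrum sm D A" and sig: "\<bar>\<sigma>\<bar> = 1" and w: "w \<noteq> 0"
  shows "\<sigma> *\<^sub>R resolvent lam x = w *\<^sub>R x \<longleftrightarrow> x \<in> D \<and> A x = (lam + \<sigma> / w) *\<^sub>R x"
proof -
  have s2: "\<sigma> * \<sigma> = 1" using sig abs_mult_self_eq[of \<sigma>] by simp
  have "\<sigma> *\<^sub>R resolvent lam x = w *\<^sub>R x \<longleftrightarrow> resolvent lam x = (\<sigma> * w) *\<^sub>R x"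
    using s2 by (metis scaleR_one scaleR_scaleR)
  also have "\<dots> \<longleftrightarrow> x \<in> D \<and> A x = (lam + 1 / (\<sigma> * w)) *\<^sub>R x"
    using w s2 by (intro resolvent_eigvec[OF ns]) auto
  also have "1 / (\<sigma> * w) = \<sigma> / w" using unit_sign_cases[OF sig] by auto
  finally show ?thesis .
qed

lemma signed_resolvent_bdd_inv:
  assumes ns: "complex_of_real lam \<notin> op_spectrum sm D A" and sig: "\<bar>\<sigma>\<bar> = 1" and w: "w \<noteq> 0"
    and ns2: "complex_of_real (lam + \<sigma> / w) \<notin> op_spectrum sm D A"
  shows "bdd_inv (\<lambda>x. \<sigma> *\<^sub>R resolvent lam x - w *\<^sub>R x)"
proof -
  have s2: "\<sigma> * \<sigma> = 1" using sig abs_mult_self_eq[of \<sigma>] by simp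
  have "lam + 1 / (\<sigma> * w) = lam + \<sigma> / w" using unit_sign_cases[OF sig] by auto
  hence "bdd_inv (\<lambda>x. resolvent lam x - (\<sigma> * w) *\<^sub>R x)"
    using resolvent_shift_bdd_inv[OF ns, of "\<sigma> * w"] ns2 w sig by (auto simp: abs_if split: if_splits)
  hence "bdd_inv (\<lambda>x. \<sigma> *\<^sub>R (resolvent lam x - (\<sigma> * w) *\<^sub>R x))"
    using bdd_inv_scale sig by fastforce
  thus ?thesis using s2 by (simp add: scaleR_diff_right mult.assoc[symmetric])
qed

text \<open>Coercivity of s(A - lam) off a set of eigenvectors Bs: if s R(lam) is nonnegative on
  the orthogonal complement of Bs, then apply the Cauchy--Schwarz bound for nonnegative
  operators to g = (A - lam) f, which again lies in that complement.\<close>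
lemma coercive_off_eigvecs:
  assumes ns: "complex_of_real lam \<notin> op_spectrum sm D A" and sig: "\<bar>\<sigma>\<bar> = 1"
    and eigT: "\<forall>b\<in>Bs. \<exists>w. \<sigma> *\<^sub>R resolvent lam b = w *\<^sub>R b"
    and eigA: "\<And>b. b \<in> Bs \<Longrightarrow> b \<in> D \<and> A b - lam *\<^sub>R b = c b *\<^sub>R b"
    and pos: "\<And>x. \<forall>b\<in>Bs. ip x b = 0 \<Longrightarrow> qform (\<lambda>x. \<sigma> *\<^sub>R resolvent lam x) x \<ge> 0"
  obtains \<kappa>' where "\<kappa>' > 0" "\<And>f. f \<in> D \<Longrightarrow> \<forall>b\<in>Bs. ip f b = 0 \<Longrightarrow>
    \<kappa>' * (norm f)\<^sup>2 \<le> \<sigma> * Re (ip (A f - lam *\<^sub>R f) f)"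
proof -
  define T where "T = resolvent lam"
  define Ts where "Ts = (\<lambda>x. \<sigma> *\<^sub>R T x)"
  have Tsb: "bounded_sa Ts"
    unfolding Ts_def T_def by (rule bsa_sign[OF resolvent_props(4)[OF ns] sig])
  obtain CT where CT: "CT > 0" "\<And>x. norm (Ts x) \<le> CT * norm x" using bsa_bound[OF Tsb] by blast
  define U where "U = {y. \<forall>b\<in>Bs. ip y b = 0}"
  have Uc: "csubspace sm U" unfolding U_def by (rule csub_orth)
  have eigTs: "\<forall>b\<in>Bs. \<exists>w. Ts b = w *\<^sub>R b" using eigT unfolding Ts_def T_def by simp
  have TU: "Ts y \<in> U" if "y \<in> U" for y
    using orth_eigvecs_invariant[OF Tsb eigTs] that unfolding U_def by blast
  have Upos: "qform Ts y \<ge> 0" if "y \<in> U" for y using pos that unfolding U_def Ts_def T_def by blast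
  have "(norm f)\<^sup>2 \<le> CT * (\<sigma> * Re (ip (A f - lam *\<^sub>R f) f))"
    if f: "f \<in> D" "\<forall>b\<in>Bs. ip f b = 0" for f
  proof -
    define g where "g = A f - lam *\<^sub>R f"
    have Tg: "T g = f" unfolding g_def T_def using resolvent_props(3)[OF ns f(1)] .
    have "ip g b = 0" if b: "b \<in> Bs" for b
      using shift_sym[OF f(1), of b lam] eigA[OF b] f(2) b unfolding g_def by (simp add: ip_scaleR_right)
    hence gU: "g \<in> U" unfolding U_def by blast
    have "(norm (Ts g))\<^sup>2 \<le> CT * qform Ts g" by (rule nonneg_operator_bound[OF Tsb Uc TU Upos CT gU])
    moreover have "norm (Ts g) = norm f" unfolding Ts_def Tg using sig by simp
    moreover have "qform Ts g = \<sigma> * Re (ip g f)"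
      unfolding qform_def Ts_def Tg using ip_conj[of g f] by (simp add: ip_scaleR_left)
    ultimately show ?thesis unfolding g_def by simp
  qed
  hence "(1 / CT) * (norm f)\<^sup>2 \<le> \<sigma> * Re (ip (A f - lam *\<^sub>R f) f)"
    if "f \<in> D" "\<forall>b\<in>Bs. ip f b = 0" for f using that CT(1) by (simp add: field_simps)
  moreover have "1 / CT > 0" using CT(1) by simp
  ultimately show ?thesis using that by blast
qed

lemma signed_reciprocal_image:
  fixes \<sigma> lam :: real
  assumes sig: "\<bar>\<sigma>\<bar> = 1" and R: "\<And>r. r \<in> R \<Longrightarrow> \<sigma> * (r - lam) < 0"
  shows "w \<in> (\<lambda>r. \<sigma> / (r - lam)) ` R \<longleftrightarrow> w \<noteq> 0 \<and> lam + \<sigma> / w \<in> R"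
    and "w \<in> (\<lambda>r. \<sigma> / (r - lam)) ` R \<Longrightarrow> w < 0"
proof -
  have s0: "\<sigma> \<noteq> 0" using sig by auto
  show iff: "w \<in> (\<lambda>r. \<sigma> / (r - lam)) ` R \<longleftrightarrow> w \<noteq> 0 \<and> lam + \<sigma> / w \<in> R"
  proof
    assume "w \<in> (\<lambda>r. \<sigma> / (r - lam)) ` R"
    then obtain r where r: "r \<in> R" "w = \<sigma> / (r - lam)" by blast
    have "r \<noteq> lam" using R[OF r(1)] by auto
    hence "w \<noteq> 0" "\<sigma> / w = r - lam" using r(2) s0 by auto
    thus "w \<noteq> 0 \<and> lam + \<sigma> / w \<in> R" using r(1) by simp
  next
    assume w: "w \<noteq> 0 \<and> lam + \<sigma> / w \<in> R"
    hence "\<sigma> / ((lam + \<sigma> / w) - lam) = w" using s0 by simp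
    thus "w \<in> (\<lambda>r. \<sigma> / (r - lam)) ` R" using w by (metis image_eqI)
  qed
  assume "w \<in> (\<lambda>r. \<sigma> / (r - lam)) ` R"
  hence "\<sigma> * (\<sigma> / w) < 0" "w \<noteq> 0" using R iff by fastforce+
  thus "w < 0" using sig abs_mult_self_eq[of \<sigma>] by (simp add: divide_less_0_iff)
qed

text \<open>If on the s-side of lam the spectrum of A consists of finitely many eigenvalues R of
  finite multiplicity, the signed resolvent s R(lam) has only finitely many negative
  eigenvalues s/(r - lam), r \<in> R, each of finite multiplicity, and is invertible at all other
  negative points.  Hence it is nonnegative off an orthonormal set of eigenvectors of A with
  eigenvalues in R.\<close>
lemma signed_resolvent_eigenbasis:
  assumes ns: "complex_of_real lam \<notin> op_spectrum sm D A" and sig: "\<bar>\<sigma>\<bar> = 1"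
    and R: "finite R" "\<And>r. r \<in> R \<Longrightarrow> \<sigma> * (r - lam) < 0"
    and Rall: "\<And>r. complex_of_real r \<in> op_spectrum sm D A \<Longrightarrow> \<sigma> * (r - lam) < 0 \<Longrightarrow> r \<in> R"
    and Rfd: "\<And>r. r \<in> R \<Longrightarrow> cfin_dim sm {x\<in>D. A x = sm (complex_of_real r) x}"
  obtains Bs where "finite Bs" "orthonormal Bs" "\<And>b. b \<in> Bs \<Longrightarrow> \<exists>r\<in>R. b \<in> D \<and> A b = r *\<^sub>R b"
    "\<forall>b\<in>Bs. \<exists>w. \<sigma> *\<^sub>R resolvent lam b = w *\<^sub>R b"
    "\<And>x. \<forall>b\<in>Bs. ip x b = 0 \<Longrightarrow> qform (\<lambda>x. \<sigma> *\<^sub>R resolvent lam x) x \<ge> 0"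
proof -
  have s2: "\<sigma> * \<sigma> = 1" using sig abs_mult_self_eq[of \<sigma>] by simp
  define Ts where "Ts = (\<lambda>x. \<sigma> *\<^sub>R resolvent lam x)"
  have Tsb: "bounded_sa Ts"
    unfolding Ts_def by (rule bsa_sign[OF resolvent_props(4)[OF ns] sig])
  define N where "N = (\<lambda>r. \<sigma> / (r - lam)) ` R"
  have N_iff: "w \<in> N \<longleftrightarrow> w \<noteq> 0 \<and> lam + \<sigma> / w \<in> R" for w
    unfolding N_def by (rule signed_reciprocal_image(1)[OF sig R(2)])
  have Nneg: "\<forall>w\<in>N. w < 0" using signed_reciprocal_image(2)[OF sig R(2)] unfolding N_def by blast
  have gap: "bdd_inv (\<lambda>x. Ts x - w *\<^sub>R x)" if w: "w < 0" "w \<notin> N" for w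
  proof (unfold Ts_def, rule signed_resolvent_bdd_inv[OF ns sig])
    show "w \<noteq> 0" using w by simp
    have "\<sigma> * ((lam + \<sigma> / w) - lam) < 0" using s2 w by (simp add: divide_less_0_iff)
    thus "complex_of_real (lam + \<sigma> / w) \<notin> op_spectrum sm D A" using Rall N_iff[of w] w by blast
  qed
  have eig_iff: "Ts x = w *\<^sub>R x \<longleftrightarrow> x \<in> D \<and> A x = (lam + \<sigma> / w) *\<^sub>R x" if "w \<in> N" for w x
    unfolding Ts_def using signed_resolvent_eigvec[OF ns sig] N_iff that by blast
  have fd: "cfin_dim sm {x. Ts x = w *\<^sub>R x}" if w: "w \<in> N" for w
  proof -
    have "{x. Ts x = w *\<^sub>R x} = {x\<in>D. A x = sm (complex_of_real (lam + \<sigma> / w)) x}"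
      using eig_iff[OF w] by (simp only: sm_real)
    moreover have "lam + \<sigma> / w \<in> R" using N_iff w by blast
    ultimately show ?thesis using Rfd by (simp only:)
  qed
  obtain Bs where Bs: "finite Bs" "orthonormal Bs" "\<forall>b\<in>Bs. \<exists>w\<in>N. Ts b = w *\<^sub>R b"
    and pos: "\<And>x. \<forall>b\<in>Bs. ip x b = 0 \<Longrightarrow> qform Ts x \<ge> 0"
    using nonneg_off_negative_eigenvectors[OF Tsb _ Nneg gap fd] R(1) unfolding N_def by blast
  have "\<exists>r\<in>R. b \<in> D \<and> A b = r *\<^sub>R b" if "b \<in> Bs" for b
    using Bs(3) that eig_iff N_iff by blast
  moreover have "\<forall>b\<in>Bs. \<exists>w. \<sigma> *\<^sub>R resolvent lam b = w *\<^sub>R b" using Bs(3) unfolding Ts_def by blast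
  ultimately show ?thesis using that Bs(1,2) pos unfolding Ts_def by blast
qed

text \<open>Under the same hypotheses lam cannot be spurious: the eigenbasis above
  and the coercivity it yields are exactly the input of the variational contradiction, with
  the eigenvalue gap kappa = min (1, min over R of |r - lam|).\<close>
lemma finite_side_not_spurious:
  assumes ns: "complex_of_real lam \<notin> op_spectrum sm D A" and sig: "\<bar>\<sigma>\<bar> = 1"
    and R: "finite R" "\<And>r. r \<in> R \<Longrightarrow> \<sigma> * (r - lam) < 0"
    and Rall: "\<And>r. complex_of_real r \<in> op_spectrum sm D A \<Longrightarrow> \<sigma> * (r - lam) < 0 \<Longrightarrow> r \<in> R"
    and Rfd: "\<And>r. r \<in> R \<Longrightarrow> cfin_dim sm {x\<in>D. A x = sm (complex_of_real r) x}"
    and spur: "lam \<in> spurious sm ip D A"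
  shows False
proof -
  obtain Bs where Bs: "finite Bs" "orthonormal Bs" and eig: "\<And>b. b \<in> Bs \<Longrightarrow> \<exists>r\<in>R. b \<in> D \<and> A b = r *\<^sub>R b"
    and eigT: "\<forall>b\<in>Bs. \<exists>w. \<sigma> *\<^sub>R resolvent lam b = w *\<^sub>R b"
    and pos: "\<And>x. \<forall>b\<in>Bs. ip x b = 0 \<Longrightarrow> qform (\<lambda>x. \<sigma> *\<^sub>R resolvent lam x) x \<ge> 0"
    using signed_resolvent_eigenbasis[OF ns sig R Rall Rfd] by blast
  obtain rb where rb: "\<And>b. b \<in> Bs \<Longrightarrow> rb b \<in> R \<and> b \<in> D \<and> A b = rb b *\<^sub>R b" using eig by metis
  define c where "c b = rb b - lam" for b
  have eigA: "b \<in> D \<and> A b - lam *\<^sub>R b = c b *\<^sub>R b" if "b \<in> Bs" for b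
    unfolding c_def using rb[OF that] by (simp add: algebra_simps)
  define \<kappa> where "\<kappa> = Min (insert 1 ((\<lambda>r. - (\<sigma> * (r - lam))) ` R))"
  have kap0: "\<kappa> > 0" unfolding \<kappa>_def using R by auto
  have kapb: "\<sigma> * c b \<le> - \<kappa>" if "b \<in> Bs" for b
  proof -
    have "\<kappa> \<le> - (\<sigma> * (rb b - lam))" unfolding \<kappa>_def using R(1) rb[OF that] by (intro Min_le) auto
    thus ?thesis unfolding c_def by simp
  qed
  obtain \<kappa>' where kap': "\<kappa>' > 0" "\<And>f. f \<in> D \<Longrightarrow> \<forall>b\<in>Bs. ip f b = 0 \<Longrightarrow>
      \<kappa>' * (norm f)\<^sup>2 \<le> \<sigma> * Re (ip (A f - lam *\<^sub>R f) f)"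
    using coercive_off_eigvecs[OF ns sig eigT eigA pos] by blast
  obtain V where V: "\<forall>n. csubspace sm (V n) \<and> cfin_dim sm (V n) \<and> V n \<subseteq> D \<and> V n \<subseteq> V (Suc n)"
    and dense: "\<forall>x\<in>D. \<forall>e>0. \<exists>n. \<exists>v\<in>V n. norm (x - v) + norm (A x - A v) < e"
    and spu: "\<forall>e>0. \<forall>\<^sub>F n in sequentially. \<exists>z\<in>compr_spectrum sm ip (V n) A. cmod (z - complex_of_real lam) < e"
    using spur unfolding spurious_def by blast
  show False
    by (rule galerkin_contradiction[where V=V, OF sig Bs _ _ kap0 kapb kap'])
      (use eigA V dense spu in auto)
qed

lemma nonessential_point:
  assumes "z \<in> op_spectrum sm D A" "z \<notin> ess_spectrum sm D A"
  shows "\<exists>e>0. \<forall>w\<in>op_spectrum sm D A. w \<noteq> z \<longrightarrow> e \<le> cmod (w - z)"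
    "\<exists>x\<in>D. x \<noteq> 0 \<and> A x = sm z x" "cfin_dim sm {x\<in>D. A x = sm z x}"
  using assms unfolding ess_spectrum_def by blast+

text \<open>If the spectrum on the s-side of lam is bounded and contains no essential spectrum,
  it is finite: it has no accumulation point, since an accumulation point would be either a
  nonessential spectral point (hence isolated) or a regular point (where eigenvalues
  cannot accumulate, A - x being bounded below).\<close>
lemma finite_spectral_side:
  assumes ns: "complex_of_real lam \<notin> op_spectrum sm D A" and sig: "\<bar>\<sigma>\<bar> = 1"
    and bdd: "\<exists>M. \<forall>r. complex_of_real r \<in> op_spectrum sm D A \<and> \<sigma> * (r - lam) < 0 \<longrightarrow> \<bar>r\<bar> \<le> M"
    and noess: "\<And>r. \<sigma> * (r - lam) \<le> 0 \<Longrightarrow> complex_of_real r \<notin> ess_spectrum sm D A"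
  shows "finite {r. complex_of_real r \<in> op_spectrum sm D A \<and> \<sigma> * (r - lam) < 0}" (is "finite ?R")
proof -
  obtain M where "\<forall>r. complex_of_real r \<in> op_spectrum sm D A \<and> \<sigma> * (r - lam) < 0 \<longrightarrow> \<bar>r\<bar> \<le> M"
    using bdd by blast
  hence M: "?R \<subseteq> {-M..M}" by (auto simp: abs_le_iff)
  have "\<not> x islimpt ?R" for x
  proof
    assume xl: "x islimpt ?R"
    have "closed {y. \<sigma> * (y - lam) \<le> 0}" by (intro closed_Collect_le continuous_intros)
    hence side: "\<sigma> * (x - lam) \<le> 0"
      using closed_limpt islimpt_subset[OF xl, of "{y. \<sigma> * (y - lam) \<le> 0}"] by fastforce
    show False
    proof (cases "complex_of_real x \<in> op_spectrum sm D A")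
      case True
      obtain e where e: "e > 0" "\<forall>w\<in>op_spectrum sm D A. w \<noteq> complex_of_real x \<longrightarrow> e \<le> cmod (w - complex_of_real x)"
        using nonessential_point(1)[OF True noess[OF side]] by blast
      obtain r where r: "r \<in> ?R" "r \<noteq> x" "dist r x < e" using xl e(1) unfolding islimpt_approachable by blast
      have "e \<le> cmod (complex_of_real r - complex_of_real x)" using e(2) r(1,2) by simp
      also have "\<dots> = dist r x" by (simp flip: of_real_diff add: dist_real_def)
      finally show False using r(3) by simp
    next
      case False
      obtain C where C: "C > 0" "\<forall>u\<in>D. norm u \<le> C * norm (A u - x *\<^sub>R u)"
        using not_in_spectrum(2)[OF False] by blast
      have "1 / C > 0" using C(1) by simp
      then obtain r where r: "r \<in> ?R" "dist r x < 1 / C" using xl unfolding islimpt_approachable by blast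
      have "\<sigma> * (r - lam) \<le> 0" using r(1) by simp
      then obtain u where u: "u \<in> D" "u \<noteq> 0" "A u = r *\<^sub>R u"
        using nonessential_point(2)[of "complex_of_real r"] r(1) noess by (auto simp: sm_real)
      have "A u - x *\<^sub>R u = (r - x) *\<^sub>R u" using u(3) by (simp add: algebra_simps)
      hence "norm u \<le> C * (\<bar>r - x\<bar> * norm u)" using C(2) u(1) by (metis norm_scaleR)
      also have "\<dots> < C * ((1 / C) * norm u)" using r(2) u(2) C(1)
        by (intro mult_strict_left_mono mult_strict_right_mono) (auto simp: dist_real_def)
      finally show False using C(1) by simp
    qed
  qed
  hence "finite ({-M..M} \<inter> ?R)" by (intro finite_not_islimpt_in_compact) auto
  thus ?thesis using M by (simp add: Int_absorb1)
qed

lemma spectral_side_not_spurious: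
  assumes ns: "complex_of_real lam \<notin> op_spectrum sm D A" and sig: "\<bar>\<sigma>\<bar> = 1"
    and bdd: "\<exists>M. \<forall>r. complex_of_real r \<in> op_spectrum sm D A \<and> \<sigma> * (r - lam) < 0 \<longrightarrow> \<bar>r\<bar> \<le> M"
    and noess: "\<And>r. \<sigma> * (r - lam) \<le> 0 \<Longrightarrow> complex_of_real r \<notin> ess_spectrum sm D A"
    and spur: "lam \<in> spurious sm ip D A"
  shows False
proof (rule finite_side_not_spurious[OF ns sig finite_spectral_side[OF ns sig bdd noess] _ _ _ spur])
  fix r assume "r \<in> {r. complex_of_real r \<in> op_spectrum sm D A \<and> \<sigma> * (r - lam) < 0}"
  thus "cfin_dim sm {x\<in>D. A x = sm (complex_of_real r) x}" using nonessential_point(3) noess by auto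
qed auto

end

text \<open>The conclusions are
  stated for the sign s = 1 in the form used by spectral_side_not_spurious.\<close>
lemma ess_hat_above:
  assumes "\<forall>a\<in>ess_hat sm D A. \<not> a \<le> ereal lam"
  shows "\<exists>M. \<forall>r. complex_of_real r \<in> op_spectrum sm D A \<and> 1 * (r - lam) < 0 \<longrightarrow> \<bar>r\<bar> \<le> M"
    and "\<And>r. 1 * (r - lam) \<le> 0 \<Longrightarrow> complex_of_real r \<notin> ess_spectrum sm D A"
proof -
  have "bdd_below (real_spectrum sm D A)" using assms unfolding ess_hat_def by (auto split: if_splits)
  then obtain a where "\<And>r. complex_of_real r \<in> op_spectrum sm D A \<Longrightarrow> a \<le> r"
    unfolding bdd_below_def real_spectrum_def by blast
  thus "\<exists>M. \<forall>r. complex_of_real r \<in> op_spectrum sm D A \<and> 1 * (r - lam) < 0 \<longrightarrow> \<bar>r\<bar> \<le> M"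
    by (intro exI[of _ "\<bar>a\<bar> + \<bar>lam\<bar>"]) force
  show "complex_of_real r \<notin> ess_spectrum sm D A" if "1 * (r - lam) \<le> 0" for r
  proof
    assume "complex_of_real r \<in> ess_spectrum sm D A"
    hence "ereal r \<in> ess_hat sm D A" unfolding ess_hat_def by blast
    thus False using assms that by force
  qed
qed

text \<open>The mirror statement above lam, for the sign s = -1.\<close>
lemma ess_hat_below:
  assumes "\<forall>b\<in>ess_hat sm D A. \<not> ereal lam \<le> b"
  shows "\<exists>M. \<forall>r. complex_of_real r \<in> op_spectrum sm D A \<and> -1 * (r - lam) < 0 \<longrightarrow> \<bar>r\<bar> \<le> M"
    and "\<And>r. -1 * (r - lam) \<le> 0 \<Longrightarrow> complex_of_real r \<notin> ess_spectrum sm D A"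
proof -
  have "bdd_above (real_spectrum sm D A)" using assms unfolding ess_hat_def by (auto split: if_splits)
  then obtain a where "\<And>r. complex_of_real r \<in> op_spectrum sm D A \<Longrightarrow> r \<le> a"
    unfolding bdd_above_def real_spectrum_def by blast
  thus "\<exists>M. \<forall>r. complex_of_real r \<in> op_spectrum sm D A \<and> -1 * (r - lam) < 0 \<longrightarrow> \<bar>r\<bar> \<le> M"
    by (intro exI[of _ "\<bar>a\<bar> + \<bar>lam\<bar>"]) force
  show "complex_of_real r \<notin> ess_spectrum sm D A" if "-1 * (r - lam) \<le> 0" for r
  proof
    assume "complex_of_real r \<in> ess_spectrum sm D A"
    hence "ereal r \<in> ess_hat sm D A" unfolding ess_hat_def by blast
    thus False using assms that by force
  qed
qed

text \<open>A spurious eigenvalue lies in the convex hull of the extended essential spectrum: if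
  not, one side of lam would carry no essential spectrum and only bounded spectrum.\<close>
theorem mainTheorem3:
  fixes sm :: "complex \<Rightarrow> 'a::banach \<Rightarrow> 'a"
    and ip :: "'a \<Rightarrow> 'a \<Rightarrow> complex"
    and D :: "'a set"
    and A :: "'a \<Rightarrow> 'a"
    and lam :: real
  assumes "complex_hilbert sm ip"
    and "hseparable TYPE('a)"
    and "selfadjoint sm ip D A"
    and "lam \<in> spurious sm ip D A"
  shows "ereal lam \<in> ConvE (ess_hat sm D A)"
proof (rule ccontr)
  interpret sym_operator sm ip D A
    using assms(1,3) unfolding selfadjoint_def by unfold_locales auto
  have ns: "complex_of_real lam \<notin> op_spectrum sm D A" using assms(4) unfolding spurious_def by blast
  assume "ereal lam \<notin> ConvE (ess_hat sm D A)"
  hence "(\<forall>a\<in>ess_hat sm D A. \<not> a \<le> ereal lam) \<or> (\<forall>b\<in>ess_hat sm D A. \<not> ereal lam \<le> b)"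
    unfolding ConvE_def by blast
  thus False
  proof
    assume "\<forall>a\<in>ess_hat sm D A. \<not> a \<le> ereal lam"
    from spectral_side_not_spurious[OF ns _ ess_hat_above[OF this] assms(4)] show False by simp
  next
    assume "\<forall>b\<in>ess_hat sm D A. \<not> ereal lam \<le> b"
    from spectral_side_not_spurious[OF ns _ ess_hat_below[OF this] assms(4)] show False by simp
  qed
qed

end
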